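(* Let $\mathcal U=(V,\tilde V,W,\tilde W,R)$ be a preordered gradient space, let $\mathcal K_0\subseteq\mathrm{Sob}(\mathcal U)$ be a convex Poincaré set which is closed with respect to the norm of $V$, let $f\in\mathrm{Sob}(\mathcal U)$ and $\psi\in\tilde V$, and set $\mathcal K_{\psi,f}=\{u\in\mathrm{Sob}(\mathcal U):u-f\in\mathcal K_0\text{ and }u\ge\psi\}$. If $\mathcal K_{\psi,f}\ne\emptyset$, then there exists $u\in\mathcal K_{\psi,f}$ with $\|g_u\|_W=\inf_{v\in\mathcal K_{\psi,f}}\|g_v\|_W$. If $u_1,u_2$ are two such minimizers, then $g_{u_1}=g_{u_2}$. Moreover, if in addition $\mathcal K_0$ is a linear subspace of $\mathrm{Sob}(\mathcal U)$ and the map $u\mapsto g_u$ is linear on $\mathrm{Sob}(\mathcal U)$, then $u_1=u_2$.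
   Context: Let $\tilde V,\tilde W$ be vector spaces over $\mathbf R$ or $\mathbf C$. A gradient relation is a set $R\subseteq\tilde V\times\tilde W$ such that (G1) if $(u,g)\in R$ and $(u',g')\in R$ then $(u+u',g+g')\in R$; (G2) if $(u,g)\in R$ and $\alpha>0$ then $(\alpha u,\alpha g)\in R$. A gradient space $\mathcal U=(V,\tilde V,W,\tilde W,R)$ consists of vector spaces $\tilde V,\tilde W$, a gradient relation $R\subseteq\tilde V\times\tilde W$, and linear subspaces $V\subseteq\tilde V$, $W\subseteq\tilde W$ such that: (GS1) $V$ is a reflexive Banach space with norm $\|\cdot\|_V$; (GS2) $W$ is a reflexive and strictly convex Banach space with norm $\|\cdot\|_W$; (GS3) if $(u,g)\in R$ with $u\in V$, $g\in W$, then there exists $g'\in W$ with $(-u,g')\in R$; (GS4) if $u,u_i\in V$ and $g,g_i\in W$ with $(u_i,g_i)\in R$ for $i=1,2,\dots$, $\|u-u_i\|_V\to0$ and $\|g-g_i\|_W\to0$, then $(u,g)\in R$. The Sobolev space of $\mathcal U$ is $\mathrm{Sob}(\mathcal U)=\{u\in V:(u,g)\in R\text{ for some }g\in W\}$. Each $u\in\mathrm{Sob}(\mathcal U)$ has a unique minimal gradient $g_u\in W$: $(u,g_u)\in R$ and $\|g_u\|_W\le\|g\|_W$ for all $g\in W$ with $(u,g)\in R$. A Poincaré set is a subset $A\subseteq\mathrm{Sob}(\mathcal U)$ for which there is $C>0$ such that $\|u\|_V\le C\|g\|_W$ for all $u\in A$ and all $g\in W$ with $(u,g)\in R$. A linear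 preorder on $\tilde V$ is a relation $\le$ with: $a\le a$; $a\le b,\ b\le c\Rightarrow a\le c$; $b\le c\Rightarrow a+b\le a+c$; $a\le b,\ \alpha\in[0,\infty)\Rightarrow\alpha a\le\alpha b$ ($b\ge a$ means $a\le b$). A preordered gradient space is a gradient space together with a linear preorder $\le$ on $\tilde V$ such that if $u_i\in V$, $\psi\in\tilde V$, $u_i\le\psi$ for all $i$ and $u_i\to u$ in $V$, then $u\le\psi$. *)

theory Defs
  imports "HOL-Analysis.Analysis"
begin

text \<open>The ambient spaces \<open>V~\<close>, \<open>W~\<close> are the types 'v, 'w (real vector spaces;
  complex spaces are covered via their underlying real structure).
  \<open>V \<subseteq> V~\<close> is a linear subspace carrying its own norm \<open>nV\<close>.\<close>

definition normed_subspace :: "'v::real_vector set \<Rightarrow> ('v \<Rightarrow> real) \<Rightarrow> bool" where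
  "normed_subspace V n \<longleftrightarrow> subspace V \<and>
     (\<forall>x\<in>V. n x \<ge> 0) \<and> (\<forall>x\<in>V. n x = 0 \<longleftrightarrow> x = 0) \<and>
     (\<forall>x\<in>V. \<forall>y\<in>V. n (x + y) \<le> n x + n y) \<and>
     (\<forall>c. \<forall>x\<in>V. n (c *\<^sub>R x) = \<bar>c\<bar> * n x)"

definition banach_subspace :: "'v::real_vector set \<Rightarrow> ('v \<Rightarrow> real) \<Rightarrow> bool" where
  "banach_subspace V n \<longleftrightarrow> normed_subspace V n \<and>
     (\<forall>s. (\<forall>i. s i \<in> V) \<and>
          (\<forall>e>0. \<exists>N. \<forall>m\<ge>N. \<forall>k\<ge>N. n (s m - s k) < e)
          \<longrightarrow> (\<exists>x\<in>V. (\<lambda>i. n (s i - x)) \<longlonglongrightarrow> 0))"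

text \<open>Continuous (real-)linear functionals on \<open>(V, n)\<close>, represented as functions vanishing off V.\<close>
definition dual_space :: "'v::real_vector set \<Rightarrow> ('v \<Rightarrow> real) \<Rightarrow> ('v \<Rightarrow> real) set" where
  "dual_space V n = {\<phi>. (\<forall>x. x \<notin> V \<longrightarrow> \<phi> x = 0) \<and>
     (\<forall>x\<in>V. \<forall>y\<in>V. \<phi> (x + y) = \<phi> x + \<phi> y) \<and>
     (\<forall>c. \<forall>x\<in>V. \<phi> (c *\<^sub>R x) = c * \<phi> x) \<and>
     (\<exists>C. \<forall>x\<in>V. \<bar>\<phi> x\<bar> \<le> C * n x)}"

definition dual_norm :: "'v::real_vector set \<Rightarrow> ('v \<Rightarrow> real) \<Rightarrow> ('v \<Rightarrow> real) \<Rightarrow> real" where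
  "dual_norm V n \<phi> = Sup {\<bar>\<phi> x\<bar> | x. x \<in> V \<and> n x \<le> 1}"

definition reflexive_banach :: "'v::real_vector set \<Rightarrow> ('v \<Rightarrow> real) \<Rightarrow> bool" where
  "reflexive_banach V n \<longleftrightarrow> banach_subspace V n \<and>
     (\<forall>\<Phi> :: ('v \<Rightarrow> real) \<Rightarrow> real.
        (\<forall>\<phi>\<in>dual_space V n. \<forall>\<psi>\<in>dual_space V n. \<Phi> (\<lambda>x. \<phi> x + \<psi> x) = \<Phi> \<phi> + \<Phi> \<psi>) \<and>
        (\<forall>c. \<forall>\<phi>\<in>dual_space V n. \<Phi> (\<lambda>x. c * \<phi> x) = c * \<Phi> \<phi>) \<and>
        (\<exists>C. \<forall>\<phi>\<in>dual_space V n. \<bar>\<Phi> \<phi>\<bar> \<le> C * dual_norm V n \<phi>)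
        \<longrightarrow> (\<exists>x\<in>V. \<forall>\<phi>\<in>dual_space V n. \<Phi> \<phi> = \<phi> x))"

definition strictly_convex_norm :: "'v::real_vector set \<Rightarrow> ('v \<Rightarrow> real) \<Rightarrow> bool" where
  "strictly_convex_norm V n \<longleftrightarrow>
     (\<forall>x\<in>V. \<forall>y\<in>V. n x = 1 \<and> n y = 1 \<and> x \<noteq> y \<longrightarrow> n ((1/2) *\<^sub>R (x + y)) < 1)"

definition gradient_relation :: "('v::real_vector \<times> 'w::real_vector) set \<Rightarrow> bool" where
  "gradient_relation R \<longleftrightarrow>
     (\<forall>u g u' g'. (u, g) \<in> R \<and> (u', g') \<in> R \<longrightarrow> (u + u', g + g') \<in> R) \<and>
     (\<forall>u g \<alpha>. (u, g) \<in> R \<and> \<alpha> > 0 \<longrightarrow> (\<alpha> *\<^sub>R u, \<alpha> *\<^sub>R g) \<in> R)"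

definition gradient_space ::
  "'v::real_vector set \<Rightarrow> ('v \<Rightarrow> real) \<Rightarrow> 'w::real_vector set \<Rightarrow> ('w \<Rightarrow> real)
     \<Rightarrow> ('v \<times> 'w) set \<Rightarrow> bool" where
  "gradient_space V nV W nW R \<longleftrightarrow> gradient_relation R \<and>
     reflexive_banach V nV \<and>
     reflexive_banach W nW \<and> strictly_convex_norm W nW \<and>
     (\<forall>u\<in>V. \<forall>g\<in>W. (u, g) \<in> R \<longrightarrow> (\<exists>g'\<in>W. (- u, g') \<in> R)) \<and>
     (\<forall>u\<in>V. \<forall>g\<in>W. \<forall>us gs. (\<forall>i. us i \<in> V \<and> gs i \<in> W \<and> (us i, gs i) \<in> R) \<and>
        (\<lambda>i. nV (u - us i)) \<longlonglongrightarrow> 0 \<and> (\<lambda>i. nW (g - gs i)) \<longlonglongrightarrow> 0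
        \<longrightarrow> (u, g) \<in> R)"

definition linear_preorder :: "('v::real_vector \<Rightarrow> 'v \<Rightarrow> bool) \<Rightarrow> bool" where
  "linear_preorder le \<longleftrightarrow> (\<forall>a. le a a) \<and> (\<forall>a b c. le a b \<and> le b c \<longrightarrow> le a c) \<and>
     (\<forall>a b c. le b c \<longrightarrow> le (a + b) (a + c)) \<and>
     (\<forall>a b \<alpha>. le a b \<and> \<alpha> \<ge> 0 \<longrightarrow> le (\<alpha> *\<^sub>R a) (\<alpha> *\<^sub>R b))"

definition preordered_gradient_space ::
  "'v::real_vector set \<Rightarrow> ('v \<Rightarrow> real) \<Rightarrow> 'w::real_vector set \<Rightarrow> ('w \<Rightarrow> real)
     \<Rightarrow> ('v \<times> 'w) set \<Rightarrow> ('v \<Rightarrow> 'v \<Rightarrow> bool) \<Rightarrow> bool" where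
  "preordered_gradient_space V nV W nW R le \<longleftrightarrow> gradient_space V nV W nW R \<and>
     linear_preorder le \<and>
     (\<forall>us u \<psi>. (\<forall>i. us i \<in> V \<and> le (us i) \<psi>) \<and> u \<in> V \<and> (\<lambda>i. nV (us i - u)) \<longlonglongrightarrow> 0
        \<longrightarrow> le u \<psi>)"

definition Sob :: "'v set \<Rightarrow> 'w set \<Rightarrow> ('v \<times> 'w) set \<Rightarrow> 'v set" where
  "Sob V W R = {u \<in> V. \<exists>g\<in>W. (u, g) \<in> R}"

text \<open>The minimal gradient (its existence and uniqueness is a known fact about gradient spaces).\<close>
definition min_grad :: "'w set \<Rightarrow> ('w \<Rightarrow> real) \<Rightarrow> ('v \<times> 'w) set \<Rightarrow> 'v \<Rightarrow> 'w" where
  "min_grad W nW R u = (THE g. g \<in> W \<and> (u, g) \<in> R \<and> (\<forall>g'\<in>W. (u, g') \<in> R \<longrightarrow> nW g \<le> nW g'))"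

definition poincare_set ::
  "'v set \<Rightarrow> ('v \<Rightarrow> real) \<Rightarrow> 'w set \<Rightarrow> ('w \<Rightarrow> real) \<Rightarrow> ('v \<times> 'w) set \<Rightarrow> 'v set \<Rightarrow> bool" where
  "poincare_set V nV W nW R A \<longleftrightarrow> A \<subseteq> Sob V W R \<and>
     (\<exists>C>0. \<forall>u\<in>A. \<forall>g\<in>W. (u, g) \<in> R \<longrightarrow> nV u \<le> C * nW g)"

end

theory Submission
  imports Defs "HOL-Library.Function_Algebras"
begin

text \<open>Existence is the direct method, with reflexivity in place of weak compactness. The
  admissible pairs \<open>(u, g) \<in> R\<close> whose gradient norm is within \<open>1/(k+1)\<close> of the infimum form
  a decreasing sequence of nonempty convex sets, bounded in \<open>V\<close> by the Poincare inequality.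
  In a reflexive space such a sequence has a point in the closure of every member (a
  Hahn--Banach argument on the dual, combined with the separation theorem). Applied first to the
  \<open>V\<close>-components and then to the gradients of pairs whose \<open>V\<close>-component is close to that point,
  it produces a pair in the closed relation \<open>R\<close> whose gradient attains the infimum.

  For two minimizers the midpoint is again admissible with the mean of the minimal gradients as
  a gradient, so strict convexity of the norm of \<open>W\<close> forces the minimal gradients to agree. If
  \<open>u \<mapsto> g\<^sub>u\<close> is linear, the difference of two minimizers lies in \<open>K\<^sub>0\<close> and has gradient \<open>0\<close>,
  so the Poincare inequality makes it vanish. Existence and uniqueness of the minimal gradient
  itself is the same argument for a single admissible point.\<close>

section \<open>Hahn--Banach for sublinear functionals\<close>

definition sublinear_on :: "'a::real_vector set \<Rightarrow> ('a \<Rightarrow> real) \<Rightarrow> bool" where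
  "sublinear_on S p \<longleftrightarrow>
     (\<forall>x\<in>S. \<forall>y\<in>S. p (x + y) \<le> p x + p y) \<and> (\<forall>x\<in>S. \<forall>c>0. p (c *\<^sub>R x) \<le> c * p x)"

lemma sublinear_on_scaleR:
  assumes "sublinear_on S p" "subspace S" "x \<in> S" "c > 0"
  shows "p (c *\<^sub>R x) = c * p x"
proof -
  have "p (c *\<^sub>R x) \<le> c * p x"
    using assms unfolding sublinear_on_def by auto
  moreover have "p ((1/c) *\<^sub>R (c *\<^sub>R x)) \<le> (1/c) * p (c *\<^sub>R x)"
    using assms subspace_scale unfolding sublinear_on_def by (metis divide_pos_pos zero_less_one)
  then have "c * p x \<le> p (c *\<^sub>R x)"
    using assms by (simp add: field_simps)
  ultimately show ?thesis by simp
qed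

lemma sublinear_on_zero_nonneg:
  assumes "sublinear_on S p" "subspace S"
  shows "0 \<le> p 0"
proof -
  have "p (0 + 0) \<le> p 0 + p 0"
    using assms unfolding sublinear_on_def by (meson subspace_0)
  then show ?thesis by simp
qed

text \<open>Partial linear functionals are handled through their graphs, so that the domain need not
  be carried along separately.\<close>

definition dominated_linear_graph ::
    "'a::real_vector set \<Rightarrow> ('a \<Rightarrow> real) \<Rightarrow> ('a \<times> real) set \<Rightarrow> bool" where
  "dominated_linear_graph S p G \<longleftrightarrow> (0, 0) \<in> G \<and>
     (\<forall>x y y'. (x, y) \<in> G \<longrightarrow> (x, y') \<in> G \<longrightarrow> y = y') \<and>
     (\<forall>x y x' y'. (x, y) \<in> G \<longrightarrow> (x', y') \<in> G \<longrightarrow> (x + x', y + y') \<in> G) \<and>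
     (\<forall>x y c. (x, y) \<in> G \<longrightarrow> (c *\<^sub>R x, c * y) \<in> G) \<and>
     (\<forall>x y. (x, y) \<in> G \<longrightarrow> x \<in> S \<and> y \<le> p x)"

context
  fixes S :: "'a::real_vector set" and p :: "'a \<Rightarrow> real" and M :: "('a \<times> real) set" and x0 :: 'a
  assumes sub: "subspace S" and sl: "sublinear_on S p" and gM: "dominated_linear_graph S p M"
    and x0S: "x0 \<in> S"
begin

private lemma graph_facts:
  "\<And>x y y'. (x, y) \<in> M \<Longrightarrow> (x, y') \<in> M \<Longrightarrow> y = y'"
  "\<And>x y x' y'. (x, y) \<in> M \<Longrightarrow> (x', y') \<in> M \<Longrightarrow> (x + x', y + y') \<in> M"
  "\<And>x y c. (x, y) \<in> M \<Longrightarrow> (c *\<^sub>R x, c * y) \<in> M"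
  "\<And>x y. (x, y) \<in> M \<Longrightarrow> x \<in> S"
  "\<And>x y. (x, y) \<in> M \<Longrightarrow> y \<le> p x"
  "(0, 0) \<in> M"
  using gM unfolding dominated_linear_graph_def by blast+

lemma dominated_linear_graph_extension_constant:
  obtains a where "\<And>x y. (x, y) \<in> M \<Longrightarrow> y - p (x - x0) \<le> a"
    and "\<And>z w. (z, w) \<in> M \<Longrightarrow> a \<le> p (z + x0) - w"
proof -
  have key: "y - p (x - x0) \<le> p (z + x0) - w" if "(x, y) \<in> M" "(z, w) \<in> M" for x y z w
  proof -
    have "y + w \<le> p ((x - x0) + (z + x0))"
      using graph_facts(2,5) that by fastforce
    also have "\<dots> \<le> p (x - x0) + p (z + x0)"
      using sl graph_facts(4) that x0S sub unfolding sublinear_on_def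
      by (meson subspace_diff subspace_add)
    finally show ?thesis by simp
  qed
  define A where "A = {y - p (x - x0) | x y. (x, y) \<in> M}"
  have "0 - p (0 - x0) \<in> A"
    using graph_facts(6) unfolding A_def by blast
  then have A_ne: "A \<noteq> {}" by blast
  have A_bdd: "bdd_above A"
    unfolding bdd_above_def A_def using key[OF _ graph_facts(6)] by auto
  show ?thesis
  proof (rule that)
    fix x y assume "(x, y) \<in> M"
    then show "y - p (x - x0) \<le> Sup A"
      using A_bdd unfolding A_def by (auto intro: cSup_upper)
  next
    fix z w assume "(z, w) \<in> M"
    then show "Sup A \<le> p (z + x0) - w"
      using A_ne key unfolding A_def by (auto intro!: cSup_least)
  qed
qed

lemma dominated_linear_graph_extension_bound:
  assumes a_up: "\<And>x y. (x, y) \<in> M \<Longrightarrow> y - p (x - x0) \<le> a"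
    and a_lo: "\<And>z w. (z, w) \<in> M \<Longrightarrow> a \<le> p (z + x0) - w"
    and xy: "(x, y) \<in> M"
  shows "y + t * a \<le> p (x + t *\<^sub>R x0)"
proof -
  consider "t = 0" | "t > 0" | "t < 0" by linarith
  then show ?thesis
  proof cases
    case 1
    then show ?thesis using graph_facts(5)[OF xy] by simp
  next
    case 2
    have m: "((1/t) *\<^sub>R x, (1/t) * y) \<in> M" using graph_facts(3) xy by blast
    have "t * a \<le> t * p ((1/t) *\<^sub>R x + x0) - y"
      using a_lo[OF m] 2 by (simp add: field_simps)
    also have "t * p ((1/t) *\<^sub>R x + x0) = p (t *\<^sub>R ((1/t) *\<^sub>R x + x0))"
      using sublinear_on_scaleR[OF sl sub _ 2] graph_facts(4)[OF m] x0S sub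
      by (simp add: subspace_add)
    finally show ?thesis using 2 by (simp add: algebra_simps)
  next
    case 3
    define s where "s = - t"
    have s: "s > 0" using 3 s_def by simp
    have m: "((1/s) *\<^sub>R x, (1/s) * y) \<in> M" using graph_facts(3) xy by blast
    have "y - s * p ((1/s) *\<^sub>R x - x0) \<le> s * a"
      using a_up[OF m] s by (simp add: field_simps)
    also have "s * p ((1/s) *\<^sub>R x - x0) = p (s *\<^sub>R ((1/s) *\<^sub>R x - x0))"
      using sublinear_on_scaleR[OF sl sub _ s] graph_facts(4)[OF m] x0S sub
      by (simp add: subspace_diff)
    finally show ?thesis using s by (simp add: s_def algebra_simps)
  qed
qed

lemma dominated_linear_graph_extension_coordinate:
  assumes x0_new: "\<forall>y. (x0, y) \<notin> M" and "(x1, y1) \<in> M" "(x2, y2) \<in> M"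
    and "x1 + t1 *\<^sub>R x0 = x2 + t2 *\<^sub>R x0"
  shows "t1 = t2"
proof (rule ccontr)
  assume "t1 \<noteq> t2"
  have "(x2 - x1, y2 - y1) \<in> M"
    using graph_facts(2)[OF assms(3) graph_facts(3)[OF assms(2), of "-1"]] by simp
  then have "((1/(t1 - t2)) *\<^sub>R (x2 - x1), (1/(t1 - t2)) * (y2 - y1)) \<in> M"
    by (rule graph_facts(3))
  moreover have "x2 - x1 = (t1 - t2) *\<^sub>R x0" using assms(4) by (simp add: algebra_simps)
  ultimately show False using \<open>t1 \<noteq> t2\<close> x0_new by simp
qed

lemma dominated_linear_graph_extend:
  assumes x0_new: "\<forall>y. (x0, y) \<notin> M"
  shows "\<exists>M'. dominated_linear_graph S p M' \<and> M \<subset> M'"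
proof -
  obtain a where a_up: "\<And>x y. (x, y) \<in> M \<Longrightarrow> y - p (x - x0) \<le> a"
    and a_lo: "\<And>z w. (z, w) \<in> M \<Longrightarrow> a \<le> p (z + x0) - w"
    using dominated_linear_graph_extension_constant by blast
  define M' where "M' = {(x + t *\<^sub>R x0, y + t * a) | x y t. (x, y) \<in> M}"
  have memM': "(x + t *\<^sub>R x0, y + t * a) \<in> M'" if "(x, y) \<in> M" for x y t
    using that M'_def by blast
  have "dominated_linear_graph S p M'"
    unfolding dominated_linear_graph_def
  proof (intro conjI allI impI)
    show "(0, 0) \<in> M'" using memM'[OF graph_facts(6), of 0] by simp
  next
    fix x y y' assume "(x, y) \<in> M'" "(x, y') \<in> M'"
    then obtain x1 y1 t1 x2 y2 t2 where h: "(x1, y1) \<in> M" "(x2, y2) \<in> M"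
      "x = x1 + t1 *\<^sub>R x0" "y = y1 + t1 * a" "x = x2 + t2 *\<^sub>R x0" "y' = y2 + t2 * a"
      unfolding M'_def by blast
    have "t1 = t2"
      using dominated_linear_graph_extension_coordinate[OF x0_new h(1,2)] h(3,5) by simp
    then show "y = y'" using h graph_facts(1) by auto
  next
    fix x y x' y' assume "(x, y) \<in> M'" "(x', y') \<in> M'"
    then obtain x1 y1 t1 x2 y2 t2 where h: "(x1, y1) \<in> M" "(x2, y2) \<in> M"
      "x = x1 + t1 *\<^sub>R x0" "y = y1 + t1 * a" "x' = x2 + t2 *\<^sub>R x0" "y' = y2 + t2 * a"
      unfolding M'_def by blast
    show "(x + x', y + y') \<in> M'"
      using memM'[OF graph_facts(2)[OF h(1,2)], of "t1 + t2"] h by (simp add: algebra_simps)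
  next
    fix x y c assume "(x, y) \<in> M'"
    then obtain x1 y1 t where h: "(x1, y1) \<in> M" "x = x1 + t *\<^sub>R x0" "y = y1 + t * a"
      unfolding M'_def by blast
    have "(c *\<^sub>R x1 + (c * t) *\<^sub>R x0, c * y1 + (c * t) * a) \<in> M'"
      by (rule memM'[OF graph_facts(3)[OF h(1)]])
    then show "(c *\<^sub>R x, c * y) \<in> M'"
      using h by (simp add: algebra_simps)
  next
    fix x y assume "(x, y) \<in> M'"
    then obtain x1 y1 t where h: "(x1, y1) \<in> M" "x = x1 + t *\<^sub>R x0" "y = y1 + t * a"
      unfolding M'_def by blast
    show "x \<in> S" using h graph_facts(4) x0S sub by (simp add: subspace_add subspace_scale)
    show "y \<le> p x" using dominated_linear_graph_extension_bound[OF a_up a_lo h(1)] h by simp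
  qed
  moreover have "M \<subseteq> M'" using memM'[of _ _ 0] by auto
  moreover have "(x0, a) \<in> M'" using memM'[OF graph_facts(6), of 1] by simp
  ultimately show ?thesis using x0_new by blast
qed

end

lemma dominated_linear_graph_Union_chain:
  assumes "\<C> \<noteq> {}" "subset.chain {G. dominated_linear_graph S p G} \<C>"
  shows "dominated_linear_graph S p (\<Union>\<C>)"
proof -
  have good: "\<And>G. G \<in> \<C> \<Longrightarrow> dominated_linear_graph S p G"
    and two: "\<And>a b. a \<in> \<Union>\<C> \<Longrightarrow> b \<in> \<Union>\<C> \<Longrightarrow> \<exists>G\<in>\<C>. a \<in> G \<and> b \<in> G"
    using assms(2) unfolding subset_chain_def by blast+
  show ?thesis
    unfolding dominated_linear_graph_def
  proof (intro conjI allI impI)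
    show "(0, 0) \<in> \<Union>\<C>" using assms(1) good unfolding dominated_linear_graph_def by blast
  next
    fix x y y' assume "(x, y) \<in> \<Union>\<C>" "(x, y') \<in> \<Union>\<C>"
    then obtain G where "G \<in> \<C>" "(x, y) \<in> G" "(x, y') \<in> G" using two by blast
    then show "y = y'" using good unfolding dominated_linear_graph_def by blast
  next
    fix x y x' y' assume "(x, y) \<in> \<Union>\<C>" "(x', y') \<in> \<Union>\<C>"
    then obtain G where "G \<in> \<C>" "(x, y) \<in> G" "(x', y') \<in> G" using two by blast
    then show "(x + x', y + y') \<in> \<Union>\<C>" using good unfolding dominated_linear_graph_def by blast
  next
    fix x y c assume "(x, y) \<in> \<Union>\<C>"
    then show "(c *\<^sub>R x, c * y) \<in> \<Union>\<C>" using good unfolding dominated_linear_graph_def by blast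
  next
    fix x y assume "(x, y) \<in> \<Union>\<C>"
    then show "x \<in> S" "y \<le> p x" using good unfolding dominated_linear_graph_def by blast+
  qed
qed

theorem hahn_banach_sublinear:
  assumes sub: "subspace S" and sl: "sublinear_on S p"
  obtains g where "\<And>x y. x \<in> S \<Longrightarrow> y \<in> S \<Longrightarrow> g (x + y) = g x + g y"
    and "\<And>x c. x \<in> S \<Longrightarrow> g (c *\<^sub>R x) = c * g x"
    and "\<And>x. x \<in> S \<Longrightarrow> g x \<le> p x"
proof -
  define \<A> where "\<A> = {G. dominated_linear_graph S p G}"
  have "{(0, 0)} \<in> \<A>"
    unfolding \<A>_def dominated_linear_graph_def
    using sublinear_on_zero_nonneg[OF sl sub] sub by (auto simp: subspace_0)
  moreover have "\<Union>\<C> \<in> \<A>" if "\<C> \<noteq> {}" "subset.chain \<A> \<C>" for \<C>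
    using dominated_linear_graph_Union_chain that unfolding \<A>_def by blast
  ultimately obtain M where M: "M \<in> \<A>" "\<And>X. X \<in> \<A> \<Longrightarrow> M \<subseteq> X \<Longrightarrow> X = M"
    using subset_Zorn_nonempty[of \<A>] by blast
  have gM: "dominated_linear_graph S p M" using M(1) \<A>_def by blast
  have total: "\<exists>y. (x, y) \<in> M" if "x \<in> S" for x
    using dominated_linear_graph_extend[OF sub sl gM that] M(2) unfolding \<A>_def by blast
  define g where "g x = (THE y. (x, y) \<in> M)" for x
  have graph: "\<And>x y y'. (x, y) \<in> M \<Longrightarrow> (x, y') \<in> M \<Longrightarrow> y = y'"
    "\<And>x y x' y'. (x, y) \<in> M \<Longrightarrow> (x', y') \<in> M \<Longrightarrow> (x + x', y + y') \<in> M"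
    "\<And>x y c. (x, y) \<in> M \<Longrightarrow> (c *\<^sub>R x, c * y) \<in> M"
    "\<And>x y. (x, y) \<in> M \<Longrightarrow> y \<le> p x"
    using gM unfolding dominated_linear_graph_def by blast+
  have g_eq: "g x = y" if "(x, y) \<in> M" for x y
    unfolding g_def using graph(1) that by (rule_tac the_equality) auto
  have g_graph: "(x, g x) \<in> M" if "x \<in> S" for x
    using total[OF that] g_eq by blast
  show ?thesis
  proof (rule that)
    fix x y assume "x \<in> S" "y \<in> S"
    then show "g (x + y) = g x + g y"
      using g_eq graph(2) g_graph by blast
  next
    fix x c assume "x \<in> S"
    then show "g (c *\<^sub>R x) = c * g x"
      using g_eq graph(3) g_graph by blast
  next
    fix x assume "x \<in> S"
    then show "g x \<le> p x"
      using graph(4) g_graph by blast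
  qed
qed

section \<open>Normed subspaces\<close>

context
  fixes V :: "'v::real_vector set" and n :: "'v \<Rightarrow> real"
  assumes ns: "normed_subspace V n"
begin

lemma normed_subspace_subspace: "subspace V"
  using ns unfolding normed_subspace_def by blast

lemma normed_subspace_closed:
  "x \<in> V \<Longrightarrow> y \<in> V \<Longrightarrow> x + y \<in> V" "x \<in> V \<Longrightarrow> y \<in> V \<Longrightarrow> x - y \<in> V"
  "x \<in> V \<Longrightarrow> c *\<^sub>R x \<in> V" "x \<in> V \<Longrightarrow> - x \<in> V" "0 \<in> V"
  using normed_subspace_subspace
  by (auto simp: subspace_add subspace_diff subspace_scale subspace_neg subspace_0)

lemma normed_subspace_nonneg: "x \<in> V \<Longrightarrow> 0 \<le> n x"
  using ns unfolding normed_subspace_def by (elim conjE) (rule bspec)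

lemma normed_subspace_eq_0_iff: "x \<in> V \<Longrightarrow> n x = 0 \<longleftrightarrow> x = 0"
  using ns unfolding normed_subspace_def by (elim conjE) (rule bspec)

lemma normed_subspace_triangle: "x \<in> V \<Longrightarrow> y \<in> V \<Longrightarrow> n (x + y) \<le> n x + n y"
  using ns unfolding normed_subspace_def by (elim conjE) simp

lemma normed_subspace_scaleR: "x \<in> V \<Longrightarrow> n (c *\<^sub>R x) = \<bar>c\<bar> * n x"
  using ns unfolding normed_subspace_def by (elim conjE) simp

lemma normed_subspace_zero: "n 0 = 0"
  using normed_subspace_eq_0_iff normed_subspace_closed(5) by blast

lemma normed_subspace_minus: "x \<in> V \<Longrightarrow> n (- x) = n x"
  using normed_subspace_scaleR[of x "-1"] by simp

lemma normed_subspace_commute: "x \<in> V \<Longrightarrow> y \<in> V \<Longrightarrow> n (x - y) = n (y - x)"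
  using normed_subspace_minus[of "y - x"] normed_subspace_closed(2) by simp

lemma normed_subspace_triangle_diff:
  "x \<in> V \<Longrightarrow> y \<in> V \<Longrightarrow> z \<in> V \<Longrightarrow> n (x - z) \<le> n (x - y) + n (y - z)"
  using normed_subspace_triangle[of "x - y" "y - z"] normed_subspace_closed(2) by simp

lemma normed_subspace_convex_combination:
  assumes "x \<in> V" "y \<in> V" "0 \<le> a" "0 \<le> b"
  shows "n (a *\<^sub>R x + b *\<^sub>R y) \<le> a * n x + b * n y"
  using normed_subspace_triangle[of "a *\<^sub>R x" "b *\<^sub>R y"] normed_subspace_scaleR[of x a]
    normed_subspace_scaleR[of y b] normed_subspace_closed(3) assms
  by simp

lemma convex_normed_subspace_cball:
  assumes "c \<in> V"
  shows "convex {x \<in> V. n (x - c) \<le> r}"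
proof (rule convexI)
  fix x y and a b :: real
  assume x: "x \<in> {x \<in> V. n (x - c) \<le> r}" and y: "y \<in> {x \<in> V. n (x - c) \<le> r}"
    and ab: "0 \<le> a" "0 \<le> b" "a + b = 1"
  have "a *\<^sub>R (x - c) + b *\<^sub>R (y - c) = a *\<^sub>R x + b *\<^sub>R y - (a + b) *\<^sub>R c"
    by (simp add: algebra_simps)
  then have "a *\<^sub>R x + b *\<^sub>R y - c = a *\<^sub>R (x - c) + b *\<^sub>R (y - c)"
    using ab(3) by simp
  then have "n (a *\<^sub>R x + b *\<^sub>R y - c) \<le> a * n (x - c) + b * n (y - c)"
    using normed_subspace_convex_combination normed_subspace_closed(2) x y ab assms by auto
  also have "\<dots> \<le> a * r + b * r"
    using x y ab by (intro add_mono mult_left_mono) auto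
  also have "\<dots> = r" using ab(3) by (simp add: distrib_right[symmetric])
  finally show "a *\<^sub>R x + b *\<^sub>R y \<in> {x \<in> V. n (x - c) \<le> r}"
    using x y by (simp add: normed_subspace_closed)
qed

end

section \<open>Sequential closedness and norm closure\<close>

definition seq_closed_in :: "'v::real_vector set \<Rightarrow> ('v \<Rightarrow> real) \<Rightarrow> 'v set \<Rightarrow> bool" where
  "seq_closed_in V n C \<longleftrightarrow>
     (\<forall>us u. (\<forall>i. us i \<in> C) \<and> u \<in> V \<and> (\<lambda>i. n (us i - u)) \<longlonglongrightarrow> 0 \<longrightarrow> u \<in> C)"

definition norm_closure :: "'v::real_vector set \<Rightarrow> ('v \<Rightarrow> real) \<Rightarrow> 'v set \<Rightarrow> 'v set" where
  "norm_closure V n Q = {x \<in> V. \<forall>e>0. \<exists>y\<in>Q. n (y - x) < e}"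

lemma LIMSEQ_0_if_le_inverse_Suc:
  fixes a :: "nat \<Rightarrow> real"
  assumes "\<And>k. 0 \<le> a k" "\<And>k. a k \<le> inverse (real (Suc k))"
  shows "a \<longlonglongrightarrow> 0"
  by (rule tendsto_sandwich[OF _ _ tendsto_const LIMSEQ_inverse_real_of_nat]) (use assms in auto)

lemma norm_closure_mono: "Q \<subseteq> Q' \<Longrightarrow> norm_closure V n Q \<subseteq> norm_closure V n Q'"
  unfolding norm_closure_def by blast

context
  fixes V :: "'v::real_vector set" and n :: "'v \<Rightarrow> real"
  assumes ns: "normed_subspace V n"
begin

lemma subset_norm_closure:
  assumes "Q \<subseteq> V"
  shows "Q \<subseteq> norm_closure V n Q"
proof
  fix x assume "x \<in> Q"
  then show "x \<in> norm_closure V n Q"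
    using assms normed_subspace_zero[OF ns] unfolding norm_closure_def
    by (auto intro!: bexI[of _ x])
qed

lemma norm_closure_sequence:
  assumes "\<And>k. Q k \<subseteq> V" "\<And>k. x \<in> norm_closure V n (Q k)"
  obtains ys where "\<And>k. ys k \<in> Q k" "(\<lambda>k. n (ys k - x)) \<longlonglongrightarrow> 0"
proof -
  have "inverse (real (Suc k)) > 0" for k by simp
  then have "\<forall>k. \<exists>y. y \<in> Q k \<and> n (y - x) < inverse (real (Suc k))"
    using assms(2) unfolding norm_closure_def by blast
  then have "\<exists>ys. \<forall>k. ys k \<in> Q k \<and> n (ys k - x) < inverse (real (Suc k))"
    by (rule choice)
  then obtain ys where ys: "\<And>k. ys k \<in> Q k" "\<And>k. n (ys k - x) < inverse (real (Suc k))"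
    by blast
  have "x \<in> V" using assms(2) unfolding norm_closure_def by blast
  have "(\<lambda>k. n (ys k - x)) \<longlonglongrightarrow> 0"
  proof (rule LIMSEQ_0_if_le_inverse_Suc)
    fix k
    have "ys k - x \<in> V"
      using ys(1)[of k] assms(1)[of k] \<open>x \<in> V\<close> normed_subspace_closed(2)[OF ns] by blast
    then show "0 \<le> n (ys k - x)" by (rule normed_subspace_nonneg[OF ns])
    show "n (ys k - x) \<le> inverse (real (Suc k))" using ys(2)[of k] by simp
  qed
  with ys(1) that show ?thesis by blast
qed

lemma norm_closure_subset_seq_closed:
  assumes "C \<subseteq> V" "seq_closed_in V n C"
  shows "norm_closure V n C \<subseteq> C"
proof
  fix x assume "x \<in> norm_closure V n C"
  then obtain ys where "\<And>k. ys k \<in> C" "(\<lambda>k. n (ys k - x)) \<longlonglongrightarrow> 0"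
    using norm_closure_sequence[of "\<lambda>_. C"] assms(1) by blast
  with \<open>x \<in> norm_closure V n C\<close> show "x \<in> C"
    using assms(2) unfolding seq_closed_in_def norm_closure_def by blast
qed

lemma seq_closed_norm_closure:
  assumes "Q \<subseteq> V"
  shows "seq_closed_in V n (norm_closure V n Q)"
  unfolding seq_closed_in_def
proof (intro allI impI)
  fix us u assume h: "(\<forall>i. us i \<in> norm_closure V n Q) \<and> u \<in> V \<and> (\<lambda>i. n (us i - u)) \<longlonglongrightarrow> 0"
  have "\<exists>y\<in>Q. n (y - u) < e" if e: "e > 0" for e
  proof -
    have e2: "e/2 > 0" using e by simp
    have "(\<lambda>i. n (us i - u)) \<longlonglongrightarrow> 0" using h by blast
    from LIMSEQ_D[OF this e2] obtain N where "\<forall>i\<ge>N. norm (n (us i - u) - 0) < e/2"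
      by blast
    then have "\<bar>n (us N - u)\<bar> < e/2" by simp
    then have N: "n (us N - u) < e/2" by (simp add: abs_less_iff)
    have usN: "us N \<in> V" "\<forall>e>0. \<exists>y\<in>Q. n (y - us N) < e"
      using h unfolding norm_closure_def by blast+
    then obtain y where y: "y \<in> Q" "n (y - us N) < e/2"
      using e2 by blast
    have "n (y - u) \<le> n (y - us N) + n (us N - u)"
      using normed_subspace_triangle_diff[OF ns _ usN(1)] y(1) assms h by blast
    with N y show ?thesis by (intro bexI[of _ y]) auto
  qed
  then show "u \<in> norm_closure V n Q" using h unfolding norm_closure_def by blast
qed

lemma convex_norm_closure:
  assumes "Q \<subseteq> V" "convex Q"
  shows "convex (norm_closure V n Q)"
proof (rule convexI)
  fix x1 x2 and a b :: real
  assume x: "x1 \<in> norm_closure V n Q" "x2 \<in> norm_closure V n Q" and ab: "0 \<le> a" "0 \<le> b" "a + b = 1"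
  have xV: "x1 \<in> V" "x2 \<in> V" using x unfolding norm_closure_def by auto
  have "\<exists>y\<in>Q. n (y - (a *\<^sub>R x1 + b *\<^sub>R x2)) < e" if "e > 0" for e
  proof -
    obtain y1 y2 where y: "y1 \<in> Q" "n (y1 - x1) < e/2" "y2 \<in> Q" "n (y2 - x2) < e/2"
      using x \<open>e > 0\<close> half_gt_zero unfolding norm_closure_def by blast
    have "y1 - x1 \<in> V" "y2 - x2 \<in> V"
      using y xV assms(1) normed_subspace_closed(2)[OF ns] by blast+
    then have "n (a *\<^sub>R (y1 - x1) + b *\<^sub>R (y2 - x2)) \<le> a * n (y1 - x1) + b * n (y2 - x2)"
      using normed_subspace_convex_combination[OF ns] ab by blast
    also have "\<dots> \<le> a * (e/2) + b * (e/2)"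
      using y ab by (intro add_mono mult_left_mono) auto
    also have "\<dots> = (a + b) * (e/2)" by (simp add: distrib_right)
    also have "\<dots> < e" using ab(3) \<open>e > 0\<close> by simp
    finally have "n (a *\<^sub>R (y1 - x1) + b *\<^sub>R (y2 - x2)) < e" .
    moreover have "a *\<^sub>R y1 + b *\<^sub>R y2 \<in> Q" using y ab assms(2) by (simp add: convexD)
    moreover have "a *\<^sub>R (y1 - x1) + b *\<^sub>R (y2 - x2) = a *\<^sub>R y1 + b *\<^sub>R y2 - (a *\<^sub>R x1 + b *\<^sub>R x2)"
      by (simp add: algebra_simps)
    ultimately show ?thesis by (intro bexI[of _ "a *\<^sub>R y1 + b *\<^sub>R y2"]) auto
  qed
  then show "a *\<^sub>R x1 + b *\<^sub>R x2 \<in> norm_closure V n Q"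
    using xV unfolding norm_closure_def by (simp add: normed_subspace_closed[OF ns])
qed

lemma norm_closure_bounded:
  assumes "Q \<subseteq> V" "\<And>y. y \<in> Q \<Longrightarrow> n y \<le> M" "x \<in> norm_closure V n Q"
  shows "n x \<le> M + 1"
proof -
  have xV: "x \<in> V" and "\<forall>e>0. \<exists>y\<in>Q. n (y - x) < e"
    using assms(3) unfolding norm_closure_def by blast+
  then obtain y where y: "y \<in> Q" "n (y - x) < 1" using zero_less_one by blast
  have yV: "y \<in> V" using y(1) assms(1) by blast
  have "n ((x - y) + y) \<le> n (x - y) + n y"
    using xV yV normed_subspace_triangle[OF ns, of "x - y" y]
    by (simp add: normed_subspace_closed[OF ns])
  moreover have "n (x - y) = n (y - x)" by (rule normed_subspace_commute[OF ns xV yV])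
  ultimately show ?thesis using y assms(2)[OF y(1)] by simp
qed

end

section \<open>Continuous linear functionals and separation\<close>

instantiation "fun" :: (type, real_vector) real_vector
begin

definition scaleR_fun :: "real \<Rightarrow> ('a \<Rightarrow> 'b) \<Rightarrow> 'a \<Rightarrow> 'b" where
  "scaleR_fun c f = (\<lambda>x. c *\<^sub>R f x)"

instance
  by standard (auto simp: scaleR_fun_def plus_fun_def fun_diff_def fun_eq_iff algebra_simps)

end

context
  fixes V :: "'v::real_vector set" and n :: "'v \<Rightarrow> real"
  assumes ns: "normed_subspace V n"
begin

lemma dual_space_zero: "\<phi> \<in> dual_space V n \<Longrightarrow> \<phi> 0 = 0"
proof -
  assume "\<phi> \<in> dual_space V n"
  then have "\<phi> (0 *\<^sub>R 0) = 0 * \<phi> 0"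
    unfolding dual_space_def using normed_subspace_closed(5)[OF ns] by blast
  then show ?thesis by simp
qed

lemma bdd_above_dual_norm:
  assumes "\<phi> \<in> dual_space V n"
  shows "bdd_above {\<bar>\<phi> x\<bar> | x. x \<in> V \<and> n x \<le> 1}"
proof -
  obtain C where C: "\<And>x. x \<in> V \<Longrightarrow> \<bar>\<phi> x\<bar> \<le> C * n x"
    using assms unfolding dual_space_def by blast
  have "\<bar>\<phi> x\<bar> \<le> \<bar>C\<bar>" if "x \<in> V" "n x \<le> 1" for x
  proof -
    have "C * n x \<le> \<bar>C\<bar> * n x"
      using normed_subspace_nonneg[OF ns that(1)] by (simp add: mult_right_mono)
    also have "\<dots> \<le> \<bar>C\<bar>" using that(2) by (simp add: mult_left_le)
    finally show ?thesis using C[OF that(1)] by simp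
  qed
  then show ?thesis unfolding bdd_above_def by blast
qed

lemma dual_space_le_dual_norm:
  assumes phi: "\<phi> \<in> dual_space V n" and x: "x \<in> V"
  shows "\<bar>\<phi> x\<bar> \<le> dual_norm V n \<phi> * n x"
proof (cases "n x = 0")
  case True
  then have "x = 0" using normed_subspace_eq_0_iff[OF ns x] by simp
  then show ?thesis using dual_space_zero[OF phi] True by simp
next
  case False
  then have nx: "n x > 0" using normed_subspace_nonneg[OF ns x] by simp
  define y where "y = (1 / n x) *\<^sub>R x"
  have yV: "y \<in> V" using x y_def normed_subspace_closed(3)[OF ns] by blast
  have ny: "n y = 1" using normed_subspace_scaleR[OF ns x, of "1 / n x"] nx y_def by simp
  have "\<bar>\<phi> y\<bar> \<le> dual_norm V n \<phi>"
    unfolding dual_norm_def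
    by (rule cSup_upper[OF _ bdd_above_dual_norm[OF phi]]) (use yV ny in auto)
  moreover have "\<phi> y = \<phi> x / n x" using phi x unfolding dual_space_def y_def by simp
  ultimately show ?thesis using nx by (simp add: abs_div divide_le_eq)
qed

lemma dual_norm_nonneg:
  assumes "\<phi> \<in> dual_space V n"
  shows "0 \<le> dual_norm V n \<phi>"
proof -
  have "\<bar>\<phi> 0\<bar> \<le> dual_norm V n \<phi>"
    unfolding dual_norm_def
    by (rule cSup_upper[OF _ bdd_above_dual_norm[OF assms]])
      (use normed_subspace_closed(5)[OF ns] normed_subspace_zero[OF ns] in auto)
  then show ?thesis by simp
qed

lemma subspace_dual_space: "subspace (dual_space V n)"
  unfolding subspace_def
proof (intro conjI ballI allI)
  show "0 \<in> dual_space V n" unfolding dual_space_def by (auto simp: zero_fun_def intro: exI[of _ 0])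
next
  fix \<phi> \<psi> assume a: "\<phi> \<in> dual_space V n" "\<psi> \<in> dual_space V n"
  obtain C1 where C1: "\<And>x. x \<in> V \<Longrightarrow> \<bar>\<phi> x\<bar> \<le> C1 * n x"
    using a(1) unfolding dual_space_def by blast
  obtain C2 where C2: "\<And>x. x \<in> V \<Longrightarrow> \<bar>\<psi> x\<bar> \<le> C2 * n x"
    using a(2) unfolding dual_space_def by blast
  note C = C1 C2
  have "\<bar>\<phi> x + \<psi> x\<bar> \<le> (C1 + C2) * n x" if "x \<in> V" for x
    using C[OF that] abs_triangle_ineq[of "\<phi> x" "\<psi> x"] by (simp add: algebra_simps)
  then show "\<phi> + \<psi> \<in> dual_space V n" using a unfolding dual_space_def plus_fun_def
    by (auto simp: algebra_simps intro!: exI[of _ "C1 + C2"])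
next
  fix c and \<phi> :: "'v \<Rightarrow> real" assume a: "\<phi> \<in> dual_space V n"
  then obtain C where C: "\<And>x. x \<in> V \<Longrightarrow> \<bar>\<phi> x\<bar> \<le> C * n x"
    unfolding dual_space_def by blast
  have "\<bar>c * \<phi> x\<bar> \<le> (\<bar>c\<bar> * C) * n x" if "x \<in> V" for x
    using C[OF that] by (simp add: abs_mult mult.assoc mult_left_mono)
  then show "c *\<^sub>R \<phi> \<in> dual_space V n" using a unfolding dual_space_def scaleR_fun_def
    by (auto simp: algebra_simps intro!: exI[of _ "\<bar>c\<bar> * C"])
qed

end

lemma convex_cone_combination:
  assumes "convex C" "c1 \<in> C" "c2 \<in> C" "0 \<le> t1" "0 \<le> t2"
  obtains c where "c \<in> C" "(t1 + t2) *\<^sub>R (c - x) = t1 *\<^sub>R (c1 - x) + t2 *\<^sub>R (c2 - x)"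
proof (cases "t1 + t2 = 0")
  case True
  then have "t1 = 0" "t2 = 0" using assms(4,5) by auto
  then show ?thesis using that[OF assms(2)] by simp
next
  case False
  then have t: "t1 + t2 > 0" using assms(4,5) by simp
  define c where "c = (t1 / (t1 + t2)) *\<^sub>R c1 + (t2 / (t1 + t2)) *\<^sub>R c2"
  have "c \<in> C"
    unfolding c_def using assms t
    by (intro convexD[OF assms(1)]) (auto simp: add_divide_distrib[symmetric])
  moreover have "(t1 + t2) *\<^sub>R c = t1 *\<^sub>R c1 + t2 *\<^sub>R c2"
    unfolding c_def using t by (simp add: scaleR_add_right)
  then have "(t1 + t2) *\<^sub>R (c - x) = t1 *\<^sub>R (c1 - x) + t2 *\<^sub>R (c2 - x)"
    by (simp add: scaleR_diff_right scaleR_add_left algebra_simps)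
  ultimately show ?thesis by (rule that)
qed

text \<open>A homogenised distance from \<open>x\<close> to \<open>C\<close>: when that distance is at least \<open>d\<close>, any linear
  functional below it separates \<open>x\<close> from \<open>C\<close>.\<close>

definition separation_gauge ::
    "('v::real_vector \<Rightarrow> real) \<Rightarrow> 'v set \<Rightarrow> 'v \<Rightarrow> real \<Rightarrow> 'v \<Rightarrow> real" where
  "separation_gauge n C x d y = Inf {n (y + t *\<^sub>R (c - x)) - t * d | t c. 0 \<le> t \<and> c \<in> C}"

context
  fixes V :: "'v::real_vector set" and n :: "'v \<Rightarrow> real" and C :: "'v set" and x :: 'v and d :: real
  assumes ns: "normed_subspace V n" and CV: "C \<subseteq> V" and C_ne: "C \<noteq> {}" and C_convex: "convex C"
    and xV: "x \<in> V" and d_le: "\<And>c. c \<in> C \<Longrightarrow> d \<le> n (c - x)"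
begin

private lemma separation_gauge_set_lower:
  assumes "y \<in> V" "0 \<le> t" "c \<in> C"
  shows "- n y \<le> n (y + t *\<^sub>R (c - x)) - t * d"
proof -
  have cx: "c - x \<in> V" using assms(3) CV xV normed_subspace_closed(2)[OF ns] by blast
  have "n (t *\<^sub>R (c - x)) \<le> n (- y) + n (y + t *\<^sub>R (c - x))"
    using normed_subspace_triangle[OF ns, of "- y" "y + t *\<^sub>R (c - x)"] assms(1) cx
    by (simp add: normed_subspace_closed[OF ns])
  moreover have "n (t *\<^sub>R (c - x)) = t * n (c - x)"
    using normed_subspace_scaleR[OF ns cx, of t] assms(2) by simp
  moreover have "t * d \<le> t * n (c - x)" using d_le[OF assms(3)] assms(2)
    by (simp add: mult_left_mono)
  ultimately show ?thesis using normed_subspace_minus[OF ns assms(1)] by simp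
qed

lemma separation_gauge_le:
  assumes "y \<in> V" "0 \<le> t" "c \<in> C"
  shows "separation_gauge n C x d y \<le> n (y + t *\<^sub>R (c - x)) - t * d"
  unfolding separation_gauge_def
proof (rule cInf_lower)
  show "n (y + t *\<^sub>R (c - x)) - t * d \<in> {n (y + t *\<^sub>R (c - x)) - t * d | t c. 0 \<le> t \<and> c \<in> C}"
    using assms(2,3) by blast
  show "bdd_below {n (y + t *\<^sub>R (c - x)) - t * d | t c. 0 \<le> t \<and> c \<in> C}"
    unfolding bdd_below_def using separation_gauge_set_lower[OF assms(1)] by blast
qed

lemma separation_gauge_greatest:
  assumes "\<And>t c. 0 \<le> t \<Longrightarrow> c \<in> C \<Longrightarrow> b \<le> n (y + t *\<^sub>R (c - x)) - t * d"
  shows "b \<le> separation_gauge n C x d y"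
  unfolding separation_gauge_def
proof (rule cInf_greatest)
  obtain c where "c \<in> C" using C_ne by blast
  then have "n (y + 0 *\<^sub>R (c - x)) - 0 * d \<in> {n (y + t *\<^sub>R (c - x)) - t * d | t c. 0 \<le> t \<and> c \<in> C}"
    by blast
  then show "{n (y + t *\<^sub>R (c - x)) - t * d | t c. 0 \<le> t \<and> c \<in> C} \<noteq> {}" by blast
qed (use assms in blast)

lemma separation_gauge_le_norm:
  assumes "y \<in> V"
  shows "separation_gauge n C x d y \<le> n y"
proof -
  obtain c where "c \<in> C" using C_ne by blast
  then show ?thesis using separation_gauge_le[OF assms order_refl] by simp
qed

lemma separation_gauge_add:
  assumes y: "y1 \<in> V" "y2 \<in> V"
  shows "separation_gauge n C x d (y1 + y2)
    \<le> separation_gauge n C x d y1 + separation_gauge n C x d y2"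
proof -
  let ?p = "separation_gauge n C x d"
  have sum: "?p (y1 + y2) \<le> (n (y1 + t1 *\<^sub>R (c1 - x)) - t1 * d) + (n (y2 + t2 *\<^sub>R (c2 - x)) - t2 * d)"
    if t: "0 \<le> t1" "c1 \<in> C" "0 \<le> t2" "c2 \<in> C" for t1 c1 t2 c2
  proof -
    obtain c where c: "c \<in> C" "(t1 + t2) *\<^sub>R (c - x) = t1 *\<^sub>R (c1 - x) + t2 *\<^sub>R (c2 - x)"
      using convex_cone_combination[OF C_convex t(2,4,1,3)] by blast
    have "?p (y1 + y2) \<le> n (y1 + y2 + (t1 + t2) *\<^sub>R (c - x)) - (t1 + t2) * d"
      using separation_gauge_le[of "y1 + y2" "t1 + t2" c] y t c(1)
      by (simp add: normed_subspace_closed[OF ns])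
    also have "y1 + y2 + (t1 + t2) *\<^sub>R (c - x) = (y1 + t1 *\<^sub>R (c1 - x)) + (y2 + t2 *\<^sub>R (c2 - x))"
      using c(2) by (simp add: algebra_simps)
    also have "n \<dots> \<le> n (y1 + t1 *\<^sub>R (c1 - x)) + n (y2 + t2 *\<^sub>R (c2 - x))"
      using t y CV xV
      by (intro normed_subspace_triangle[OF ns]) (auto simp: normed_subspace_closed[OF ns])
    finally show ?thesis by (simp add: algebra_simps)
  qed
  have "?p (y1 + y2) - (n (y2 + t2 *\<^sub>R (c2 - x)) - t2 * d) \<le> ?p y1"
    if "0 \<le> t2" "c2 \<in> C" for t2 c2
  proof (rule separation_gauge_greatest)
    fix t1 :: real and c1 assume "0 \<le> t1" "c1 \<in> C"
    then show "?p (y1 + y2) - (n (y2 + t2 *\<^sub>R (c2 - x)) - t2 * d) \<le> n (y1 + t1 *\<^sub>R (c1 - x)) - t1 * d"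
      using sum[OF _ _ that] by fastforce
  qed
  then have "?p (y1 + y2) - ?p y1 \<le> ?p y2"
    by (intro separation_gauge_greatest) fastforce
  then show ?thesis by simp
qed

lemma separation_gauge_scaleR:
  assumes y: "y \<in> V" and s: "0 < s"
  shows "separation_gauge n C x d (s *\<^sub>R y) \<le> s * separation_gauge n C x d y"
proof -
  let ?p = "separation_gauge n C x d"
  have "?p (s *\<^sub>R y) \<le> s * (n (y + t *\<^sub>R (c - x)) - t * d)" if t: "0 \<le> t" "c \<in> C" for t c
  proof -
    have v: "y + t *\<^sub>R (c - x) \<in> V"
      using y t(2) CV xV by (auto simp: normed_subspace_closed[OF ns])
    have "?p (s *\<^sub>R y) \<le> n (s *\<^sub>R y + (s * t) *\<^sub>R (c - x)) - (s * t) * d"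
      using separation_gauge_le[of "s *\<^sub>R y" "s * t" c] y s t
      by (simp add: normed_subspace_closed[OF ns])
    also have "s *\<^sub>R y + (s * t) *\<^sub>R (c - x) = s *\<^sub>R (y + t *\<^sub>R (c - x))"
      by (simp add: algebra_simps)
    also have "n (s *\<^sub>R (y + t *\<^sub>R (c - x))) = s * n (y + t *\<^sub>R (c - x))"
      using normed_subspace_scaleR[OF ns v] s by simp
    finally show ?thesis by (simp add: right_diff_distrib)
  qed
  then have "?p (s *\<^sub>R y) / s \<le> ?p y"
    using s by (intro separation_gauge_greatest) (simp add: field_simps)
  then show ?thesis using s by (simp add: field_simps)
qed

lemma sublinear_on_separation_gauge: "sublinear_on V (separation_gauge n C x d)"
  unfolding sublinear_on_def using separation_gauge_add separation_gauge_scaleR by blast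

end

lemma seq_closed_positive_distance:
  assumes ns: "normed_subspace V n" and "C \<subseteq> V" "seq_closed_in V n C" "x \<in> V" "x \<notin> C"
  obtains d where "d > 0" "\<And>c. c \<in> C \<Longrightarrow> d \<le> n (c - x)"
proof -
  have "\<exists>d>0. \<forall>c\<in>C. d \<le> n (c - x)"
  proof (rule ccontr)
    assume "\<not> ?thesis"
    then have "x \<in> norm_closure V n C"
      using assms(4) unfolding norm_closure_def by (auto simp: not_le)
    then show False
      using norm_closure_subset_seq_closed[OF ns assms(2,3)] assms(5) by blast
  qed
  then show ?thesis using that by blast
qed

lemma dual_space_restrict:
  assumes ns: "normed_subspace V n"
    and add: "\<And>y z. y \<in> V \<Longrightarrow> z \<in> V \<Longrightarrow> g (y + z) = g y + g z"
    and scale: "\<And>y c. y \<in> V \<Longrightarrow> g (c *\<^sub>R y) = c * g y"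
    and bdd: "\<And>y. y \<in> V \<Longrightarrow> \<bar>g y\<bar> \<le> B * n y"
  shows "(\<lambda>y. if y \<in> V then g y else 0) \<in> dual_space V n"
  unfolding dual_space_def
  using add scale bdd by (auto simp: normed_subspace_closed[OF ns] intro!: exI[of _ B])

theorem separation_seq_closed_convex:
  assumes ns: "normed_subspace V n" and CV: "C \<subseteq> V" and C_ne: "C \<noteq> {}" and C_convex: "convex C"
    and C_closed: "seq_closed_in V n C" and xV: "x \<in> V" and xC: "x \<notin> C"
  obtains \<phi> \<delta> where "\<phi> \<in> dual_space V n" "\<And>c. c \<in> C \<Longrightarrow> \<phi> c \<le> \<delta>" "\<delta> < \<phi> x"
proof -
  obtain d where d: "d > 0" "\<And>c. c \<in> C \<Longrightarrow> d \<le> n (c - x)"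
    using seq_closed_positive_distance[OF ns CV C_closed xV xC] by blast
  let ?p = "separation_gauge n C x d"
  obtain g where g_add: "\<And>y z. y \<in> V \<Longrightarrow> z \<in> V \<Longrightarrow> g (y + z) = g y + g z"
    and g_scale: "\<And>y c. y \<in> V \<Longrightarrow> g (c *\<^sub>R y) = c * g y"
    and g_le: "\<And>y. y \<in> V \<Longrightarrow> g y \<le> ?p y"
    using hahn_banach_sublinear[OF normed_subspace_subspace[OF ns]
        sublinear_on_separation_gauge[OF ns CV C_ne C_convex xV d(2)]]
    by blast
  have g_le_n: "g y \<le> n y" if "y \<in> V" for y
    using g_le[OF that] separation_gauge_le_norm[OF ns CV C_ne C_convex xV d(2) that] by linarith
  have g_abs: "\<bar>g y\<bar> \<le> n y" if "y \<in> V" for y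
    using g_le_n[OF that] g_le_n[of "- y"] g_scale[OF that, of "-1"]
      normed_subspace_minus[OF ns that]
      that by (simp add: normed_subspace_closed[OF ns])
  define \<phi> where "\<phi> y = (if y \<in> V then - g y else 0)" for y
  have "\<phi> \<in> dual_space V n"
    unfolding \<phi>_def
    by (rule dual_space_restrict[OF ns, of _ 1]) (simp_all add: g_add g_scale g_abs)
  moreover have "\<phi> c \<le> \<phi> x - d" if c: "c \<in> C" for c
  proof -
    have cV: "c \<in> V" using c CV by blast
    have xc: "x - c \<in> V" using cV xV by (simp add: normed_subspace_closed[OF ns])
    have "?p (x - c) \<le> n ((x - c) + 1 *\<^sub>R (c - x)) - 1 * d"
      using separation_gauge_le[OF ns CV C_ne C_convex xV d(2) xc, of 1 c] c by simp
    then have "g (x - c) \<le> - d"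
      using g_le[OF xc] normed_subspace_zero[OF ns] by simp
    moreover have "g (x - c) = g x - g c"
      using g_add[OF xc cV] by simp
    ultimately show ?thesis using cV xV by (simp add: \<phi>_def)
  qed
  ultimately show ?thesis using d(1) that[of \<phi> "\<phi> x - d"] by force
qed

section \<open>Nested convex sets in reflexive spaces\<close>

lemma reflexive_banach_evaluation:
  assumes rb: "reflexive_banach V n"
    and add: "\<And>\<phi> \<psi>. \<phi> \<in> dual_space V n \<Longrightarrow> \<psi> \<in> dual_space V n \<Longrightarrow> \<Phi> (\<phi> + \<psi>) = \<Phi> \<phi> + \<Phi> \<psi>"
    and scale: "\<And>\<phi> c. \<phi> \<in> dual_space V n \<Longrightarrow> \<Phi> (c *\<^sub>R \<phi>) = c * \<Phi> \<phi>"
    and bdd: "\<And>\<phi>. \<phi> \<in> dual_space V n \<Longrightarrow> \<bar>\<Phi> \<phi>\<bar> \<le> C * dual_norm V n \<phi>"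
  obtains x where "x \<in> V" "\<And>\<phi>. \<phi> \<in> dual_space V n \<Longrightarrow> \<Phi> \<phi> = \<phi> x"
proof -
  have "(\<lambda>x. \<phi> x + \<psi> x) = \<phi> + \<psi>" "(\<lambda>x. c * \<phi> x) = c *\<^sub>R \<phi>"
    for \<phi> \<psi> :: "'a \<Rightarrow> real" and c
    by (simp_all add: plus_fun_def scaleR_fun_def)
  then have "\<forall>\<Phi>. (\<forall>\<phi>\<in>dual_space V n. \<forall>\<psi>\<in>dual_space V n. \<Phi> (\<phi> + \<psi>) = \<Phi> \<phi> + \<Phi> \<psi>) \<and>
      (\<forall>c. \<forall>\<phi>\<in>dual_space V n. \<Phi> (c *\<^sub>R \<phi>) = c * \<Phi> \<phi>) \<and>
      (\<exists>C. \<forall>\<phi>\<in>dual_space V n. \<bar>\<Phi> \<phi>\<bar> \<le> C * dual_norm V n \<phi>)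
      \<longrightarrow> (\<exists>x\<in>V. \<forall>\<phi>\<in>dual_space V n. \<Phi> \<phi> = \<phi> x)"
    using rb unfolding reflexive_banach_def by simp
  then have "\<exists>x\<in>V. \<forall>\<phi>\<in>dual_space V n. \<Phi> \<phi> = \<phi> x"
    by (rule mp[OF spec[of _ \<Phi>]]) (use add scale bdd in blast)
  then show ?thesis using that by blast
qed

definition nested_support :: "(nat \<Rightarrow> 'v set) \<Rightarrow> ('v \<Rightarrow> real) \<Rightarrow> real" where
  "nested_support Cs \<phi> = Inf {s. \<exists>k. \<forall>x\<in>Cs k. \<phi> x \<le> s}"

locale bounded_nested_sets =
  fixes V :: "'v::real_vector set" and n :: "'v \<Rightarrow> real" and Cs :: "nat \<Rightarrow> 'v set" and M :: real
  assumes ns: "normed_subspace V n" and Cs_sub: "\<And>k. Cs k \<subseteq> V" and Cs_ne: "\<And>k. Cs k \<noteq> {}"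
    and Cs_dec: "\<And>k. Cs (Suc k) \<subseteq> Cs k" and Cs_bdd: "\<And>x. x \<in> Cs 0 \<Longrightarrow> n x \<le> M"
begin

lemma nested_dual_bound:
  assumes "\<phi> \<in> dual_space V n" "x \<in> Cs k"
  shows "\<bar>\<phi> x\<bar> \<le> dual_norm V n \<phi> * M"
proof -
  have x0: "x \<in> Cs 0"
    using lift_Suc_antimono_le[of Cs, OF Cs_dec, of 0 k] assms(2) by auto
  have "\<bar>\<phi> x\<bar> \<le> dual_norm V n \<phi> * n x"
    using dual_space_le_dual_norm[OF ns assms(1)] x0 Cs_sub by blast
  also have "\<dots> \<le> dual_norm V n \<phi> * M"
    using Cs_bdd[OF x0] dual_norm_nonneg[OF ns assms(1)] by (simp add: mult_left_mono)
  finally show ?thesis .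
qed

lemma nested_support_le:
  assumes "\<phi> \<in> dual_space V n" "\<forall>x\<in>Cs k. \<phi> x \<le> s"
  shows "nested_support Cs \<phi> \<le> s"
  unfolding nested_support_def
proof (rule cInf_lower)
  show "s \<in> {s. \<exists>k. \<forall>x\<in>Cs k. \<phi> x \<le> s}" using assms(2) by blast
  show "bdd_below {s. \<exists>k. \<forall>x\<in>Cs k. \<phi> x \<le> s}"
  proof (rule bdd_belowI)
    fix s' assume "s' \<in> {s. \<exists>k. \<forall>x\<in>Cs k. \<phi> x \<le> s}"
    then obtain k' where k': "\<forall>x\<in>Cs k'. \<phi> x \<le> s'" by blast
    obtain x where x: "x \<in> Cs k'" using Cs_ne by blast
    show "- (dual_norm V n \<phi> * M) \<le> s'"
      using k' x nested_dual_bound[OF assms(1) x] by (auto simp: abs_le_iff)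
  qed
qed

lemma nested_support_le_dual_norm:
  assumes "\<phi> \<in> dual_space V n"
  shows "nested_support Cs \<phi> \<le> dual_norm V n \<phi> * M"
  using nested_dual_bound[OF assms, of _ 0]
  by (intro nested_support_le[OF assms, of 0]) (simp add: abs_le_iff)

lemma nested_support_greatest:
  assumes "\<phi> \<in> dual_space V n" "\<And>s k. \<forall>x\<in>Cs k. \<phi> x \<le> s \<Longrightarrow> b \<le> s"
  shows "b \<le> nested_support Cs \<phi>"
  unfolding nested_support_def
proof (rule cInf_greatest)
  have "\<forall>x\<in>Cs 0. \<phi> x \<le> dual_norm V n \<phi> * M"
    using nested_dual_bound[OF assms(1)] by (simp add: abs_le_iff)
  then show "{s. \<exists>k. \<forall>x\<in>Cs k. \<phi> x \<le> s} \<noteq> {}" by blast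
qed (use assms(2) in blast)

lemma sublinear_on_nested_support: "sublinear_on (dual_space V n) (nested_support Cs)"
  unfolding sublinear_on_def
proof (intro conjI ballI allI impI)
  let ?p = "nested_support Cs"
  fix \<phi> \<psi> assume \<phi>: "\<phi> \<in> dual_space V n" and \<psi>: "\<psi> \<in> dual_space V n"
  have \<phi>\<psi>: "\<phi> + \<psi> \<in> dual_space V n"
    using subspace_dual_space[OF ns] \<phi> \<psi> by (simp add: subspace_add)
  have sum: "?p (\<phi> + \<psi>) \<le> s1 + s2" if "\<forall>x\<in>Cs k1. \<phi> x \<le> s1" "\<forall>x\<in>Cs k2. \<psi> x \<le> s2" for s1 s2 k1 k2
  proof (rule nested_support_le[OF \<phi>\<psi>])
    have "Cs (max k1 k2) \<subseteq> Cs k1" "Cs (max k1 k2) \<subseteq> Cs k2"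
      using lift_Suc_antimono_le[of Cs, OF Cs_dec] by auto
    then show "\<forall>x\<in>Cs (max k1 k2). (\<phi> + \<psi>) x \<le> s1 + s2"
      using that by (fastforce simp: plus_fun_def intro: add_mono)
  qed
  have "?p (\<phi> + \<psi>) - s2 \<le> ?p \<phi>" if "\<forall>x\<in>Cs k2. \<psi> x \<le> s2" for s2 k2
  proof (rule nested_support_greatest[OF \<phi>])
    fix s1 k1 assume "\<forall>x\<in>Cs k1. \<phi> x \<le> s1"
    then show "?p (\<phi> + \<psi>) - s2 \<le> s1" using sum[OF _ that] by fastforce
  qed
  then have "?p (\<phi> + \<psi>) - ?p \<phi> \<le> ?p \<psi>"
    by (intro nested_support_greatest[OF \<psi>]) fastforce
  then show "?p (\<phi> + \<psi>) \<le> ?p \<phi> + ?p \<psi>" by simp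
next
  let ?p = "nested_support Cs"
  fix \<phi> and c :: real assume \<phi>: "\<phi> \<in> dual_space V n" and c: "0 < c"
  have c\<phi>: "c *\<^sub>R \<phi> \<in> dual_space V n"
    using subspace_dual_space[OF ns] \<phi> by (simp add: subspace_scale)
  have "?p (c *\<^sub>R \<phi>) / c \<le> ?p \<phi>"
  proof (rule nested_support_greatest[OF \<phi>])
    fix s k assume "\<forall>x\<in>Cs k. \<phi> x \<le> s"
    then have "\<forall>x\<in>Cs k. (c *\<^sub>R \<phi>) x \<le> c * s" using c by (simp add: scaleR_fun_def)
    then have "?p (c *\<^sub>R \<phi>) \<le> c * s" by (rule nested_support_le[OF c\<phi>])
    then show "?p (c *\<^sub>R \<phi>) / c \<le> s" using c by (simp add: field_simps)
  qed
  then show "?p (c *\<^sub>R \<phi>) \<le> c * ?p \<phi>" using c by (simp add: field_simps)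
qed

end

text \<open>A linear functional below \<open>nested_support Cs\<close> is bounded on the dual, hence by
  reflexivity it is evaluation at some \<open>x\<close>; a functional separating \<open>x\<close> from some \<open>Cs k\<close>
  would contradict this bound.\<close>

theorem reflexive_nested_convex_inter:
  assumes rb: "reflexive_banach V n"
    and Cs_sub: "\<And>k. Cs k \<subseteq> V" and Cs_ne: "\<And>k. Cs k \<noteq> {}" and Cs_convex: "\<And>k. convex (Cs k)"
    and Cs_closed: "\<And>k. seq_closed_in V n (Cs k)" and Cs_dec: "\<And>k. Cs (Suc k) \<subseteq> Cs k"
    and Cs_bdd: "\<And>x. x \<in> Cs 0 \<Longrightarrow> n x \<le> M"
  obtains x where "\<And>k. x \<in> Cs k"
proof -
  have ns: "normed_subspace V n"
    using rb unfolding reflexive_banach_def banach_subspace_def by blast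
  interpret bounded_nested_sets V n Cs M
    using ns Cs_sub Cs_ne Cs_dec Cs_bdd by unfold_locales
  let ?D = "dual_space V n" and ?p = "nested_support Cs"
  obtain \<Phi> where \<Phi>_add: "\<And>\<phi> \<psi>. \<phi> \<in> ?D \<Longrightarrow> \<psi> \<in> ?D \<Longrightarrow> \<Phi> (\<phi> + \<psi>) = \<Phi> \<phi> + \<Phi> \<psi>"
    and \<Phi>_scale: "\<And>\<phi> c. \<phi> \<in> ?D \<Longrightarrow> \<Phi> (c *\<^sub>R \<phi>) = c * \<Phi> \<phi>"
    and \<Phi>_le: "\<And>\<phi>. \<phi> \<in> ?D \<Longrightarrow> \<Phi> \<phi> \<le> ?p \<phi>"
    using hahn_banach_sublinear[OF subspace_dual_space[OF ns] sublinear_on_nested_support]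
    by blast
  have \<Phi>_bdd: "\<bar>\<Phi> \<phi>\<bar> \<le> M * dual_norm V n \<phi>" if \<phi>: "\<phi> \<in> ?D" for \<phi>
  proof -
    have up: "\<Phi> \<psi> \<le> M * dual_norm V n \<psi>" if "\<psi> \<in> ?D" for \<psi>
      using \<Phi>_le[OF that] nested_support_le_dual_norm[OF that] by (simp add: mult.commute)
    have "(-1) *\<^sub>R \<phi> \<in> ?D" using subspace_scale[OF subspace_dual_space[OF ns] \<phi>] .
    moreover have "dual_norm V n ((-1) *\<^sub>R \<phi>) = dual_norm V n \<phi>"
      unfolding dual_norm_def scaleR_fun_def by simp
    ultimately have "- \<Phi> \<phi> \<le> M * dual_norm V n \<phi>"
      using up[of "(-1) *\<^sub>R \<phi>"] \<Phi>_scale[OF \<phi>, of "-1"] by simp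
    then show ?thesis using up[OF \<phi>] by (simp add: abs_le_iff)
  qed
  obtain x where "x \<in> V" and x: "\<And>\<phi>. \<phi> \<in> ?D \<Longrightarrow> \<Phi> \<phi> = \<phi> x"
    using reflexive_banach_evaluation[OF rb \<Phi>_add \<Phi>_scale \<Phi>_bdd] by blast
  have "x \<in> Cs k" for k
  proof (rule ccontr)
    assume "x \<notin> Cs k"
    then obtain \<phi> \<delta> where \<phi>: "\<phi> \<in> ?D" "\<And>c. c \<in> Cs k \<Longrightarrow> \<phi> c \<le> \<delta>" "\<delta> < \<phi> x"
      using separation_seq_closed_convex[OF ns Cs_sub Cs_ne Cs_convex Cs_closed \<open>x \<in> V\<close>] by blast
    have "\<phi> x \<le> \<delta>"
      using \<Phi>_le[OF \<phi>(1)] nested_support_le[OF \<phi>(1), of k \<delta>] \<phi>(2) x[OF \<phi>(1)] by auto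
    then show False using \<phi>(3) by simp
  qed
  then show ?thesis by (rule that)
qed

theorem reflexive_nested_convex_norm_closure:
  assumes rb: "reflexive_banach V n"
    and Q_sub: "\<And>k. Q k \<subseteq> V" and Q_ne: "\<And>k. Q k \<noteq> {}" and Q_convex: "\<And>k. convex (Q k)"
    and Q_dec: "\<And>k. Q (Suc k) \<subseteq> Q k" and Q_bdd: "\<And>x. x \<in> Q 0 \<Longrightarrow> n x \<le> M"
  obtains x where "x \<in> V" "\<And>k. x \<in> norm_closure V n (Q k)"
proof -
  have ns: "normed_subspace V n"
    using rb unfolding reflexive_banach_def banach_subspace_def by blast
  let ?C = "\<lambda>k. norm_closure V n (Q k)"
  have "?C k \<subseteq> V" for k unfolding norm_closure_def by blast
  moreover have "?C k \<noteq> {}" for k using subset_norm_closure[OF ns Q_sub] Q_ne by blast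
  moreover have "convex (?C k)" for k by (rule convex_norm_closure[OF ns Q_sub Q_convex])
  moreover have "seq_closed_in V n (?C k)" for k by (rule seq_closed_norm_closure[OF ns Q_sub])
  moreover have "?C (Suc k) \<subseteq> ?C k" for k by (rule norm_closure_mono[OF Q_dec])
  moreover have "n y \<le> M + 1" if "y \<in> ?C 0" for y
    using norm_closure_bounded[OF ns Q_sub[of 0]] Q_bdd that by blast
  ultimately obtain x where x: "\<And>k. x \<in> ?C k"
    using reflexive_nested_convex_inter[OF rb, of ?C "M + 1"] by blast
  moreover have "x \<in> V" using x[of 0] unfolding norm_closure_def by blast
  ultimately show ?thesis using that by blast
qed

section \<open>Gradient spaces\<close>

lemma convex_gradient_relation:
  assumes "gradient_relation R"
  shows "convex R"
proof (rule convexI)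
  fix p q and a b :: real
  assume pq: "p \<in> R" "q \<in> R" and ab: "0 \<le> a" "0 \<le> b" "a + b = 1"
  have add: "\<And>u g u' g'. (u, g) \<in> R \<Longrightarrow> (u', g') \<in> R \<Longrightarrow> (u + u', g + g') \<in> R"
    and pos: "\<And>u g \<alpha>. (u, g) \<in> R \<Longrightarrow> \<alpha> > 0 \<Longrightarrow> (\<alpha> *\<^sub>R u, \<alpha> *\<^sub>R g) \<in> R"
    using assms unfolding gradient_relation_def by blast+
  consider "a = 0" | "b = 0" | "a > 0" "b > 0" using ab by linarith
  then show "a *\<^sub>R p + b *\<^sub>R q \<in> R"
  proof cases
    case 1
    then show ?thesis using pq ab by simp
  next
    case 2
    then show ?thesis using pq ab by simp
  next
    case 3
    have "a *\<^sub>R p + b *\<^sub>R q = (a *\<^sub>R fst p + b *\<^sub>R fst q, a *\<^sub>R snd p + b *\<^sub>R snd q)"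
      by (simp add: prod_eq_iff)
    then show ?thesis
      using add[OF pos[of "fst p" "snd p" a] pos[of "fst q" "snd q" b]] pq 3 by simp
  qed
qed

lemma strictly_convex_norm_midpoint_eq:
  assumes ns: "normed_subspace W n" and sc: "strictly_convex_norm W n"
    and g: "g1 \<in> W" "g2 \<in> W" "n g1 = n g2" "n g1 \<le> n ((1/2) *\<^sub>R (g1 + g2))"
  shows "g1 = g2"
proof (rule ccontr)
  assume ne: "g1 \<noteq> g2"
  define m where "m = n g1"
  have "m \<noteq> 0"
  proof
    assume "m = 0"
    then have "n g1 = 0" "n g2 = 0" using g(3) unfolding m_def by simp_all
    then have "g1 = 0" "g2 = 0" using g(1,2) normed_subspace_eq_0_iff[OF ns] by blast+
    then show False using ne by simp
  qed
  then have m: "m > 0" using normed_subspace_nonneg[OF ns g(1)] unfolding m_def by simp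
  have "(1/m) *\<^sub>R g1 \<in> W" "(1/m) *\<^sub>R g2 \<in> W" "n ((1/m) *\<^sub>R g1) = 1" "n ((1/m) *\<^sub>R g2) = 1"
    using g m normed_subspace_scaleR[OF ns] normed_subspace_closed(3)[OF ns] unfolding m_def by auto
  moreover have "(1/m) *\<^sub>R g1 \<noteq> (1/m) *\<^sub>R g2" using ne m by simp
  ultimately have "n ((1/2) *\<^sub>R ((1/m) *\<^sub>R g1 + (1/m) *\<^sub>R g2)) < 1"
    using sc unfolding strictly_convex_norm_def by blast
  moreover define h where "h = (1/2) *\<^sub>R (g1 + g2)"
  have "(1/2) *\<^sub>R ((1/m) *\<^sub>R g1 + (1/m) *\<^sub>R g2) = (1/m) *\<^sub>R h"
    unfolding h_def by (simp add: algebra_simps)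
  moreover have "h \<in> W" unfolding h_def using g by (simp add: normed_subspace_closed[OF ns])
  then have "n ((1/m) *\<^sub>R h) = n h / m"
    using normed_subspace_scaleR[OF ns, of h "1/m"] m by simp
  ultimately have "n h / m < 1" by simp
  then have "n ((1/2) *\<^sub>R (g1 + g2)) < m" using m unfolding h_def by simp
  then show False using g(4) unfolding m_def by simp
qed

lemma norm_sublevels_of_pairs:
  fixes P :: "('v::real_vector \<times> 'w::real_vector) set"
  assumes ns: "normed_subspace W n" and P: "convex P" "P \<subseteq> UNIV \<times> W" "P \<noteq> {}"
  defines "m \<equiv> Inf ((\<lambda>p. n (snd p)) ` P)"
  shows "\<And>p. p \<in> P \<Longrightarrow> m \<le> n (snd p)"
    and "\<And>e. e > 0 \<Longrightarrow> {p \<in> P. n (snd p) \<le> m + e} \<noteq> {}"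
    and "\<And>r. convex {p \<in> P. n (snd p) \<le> r}"
proof -
  have bdd: "bdd_below ((\<lambda>p. n (snd p)) ` P)"
    using P(2) normed_subspace_nonneg[OF ns] by (intro bdd_belowI[of _ 0]) auto
  show "m \<le> n (snd p)" if "p \<in> P" for p
    unfolding m_def using that by (intro cInf_lower[OF _ bdd]) simp
  show "{p \<in> P. n (snd p) \<le> m + e} \<noteq> {}" if "e > 0" for e
  proof -
    have "(\<lambda>p. n (snd p)) ` P \<noteq> {}" "Inf ((\<lambda>p. n (snd p)) ` P) < m + e"
      using P(3) that unfolding m_def by auto
    from cInf_lessD[OF this] obtain p where "p \<in> P" "n (snd p) < m + e"
      by blast
    then have "p \<in> {p \<in> P. n (snd p) \<le> m + e}" by simp
    then show ?thesis by blast
  qed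
  show "convex {p \<in> P. n (snd p) \<le> r}" for r
  proof -
    have "{p \<in> P. n (snd p) \<le> r} = P \<inter> (UNIV \<times> {h \<in> W. n (h - 0) \<le> r})"
      using P(2) by auto
    then show ?thesis
      using P(1) convex_normed_subspace_cball[OF ns normed_subspace_closed(5)[OF ns]]
      by (simp add: convex_Int convex_Times)
  qed
qed

lemma reflexive_nested_convex_linear_image:
  assumes rb: "reflexive_banach V n" and L: "linear L"
    and S_sub: "\<And>k. L ` S k \<subseteq> V" and S_ne: "\<And>k. S k \<noteq> {}" and S_convex: "\<And>k. convex (S k)"
    and S_dec: "\<And>k. S (Suc k) \<subseteq> S k" and S_bdd: "\<And>p. p \<in> S 0 \<Longrightarrow> n (L p) \<le> M"
  obtains x where "x \<in> V" "\<And>k. x \<in> norm_closure V n (L ` S k)"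
proof -
  have ne: "L ` S k \<noteq> {}" for k using S_ne[of k] by simp
  have convex: "convex (L ` S k)" for k by (rule convex_linear_image[OF L S_convex])
  have dec: "L ` S (Suc k) \<subseteq> L ` S k" for k by (rule image_mono[OF S_dec])
  have bdd: "n y \<le> M" if "y \<in> L ` S 0" for y using S_bdd that by auto
  show ?thesis
    using reflexive_nested_convex_norm_closure[where Q = "\<lambda>k. L ` S k",
        OF rb S_sub ne convex dec bdd]
      that by blast
qed

lemma normed_subspace_le_of_approx:
  assumes ns: "normed_subspace W n" and g: "g \<in> W" and gs: "\<And>k. gs k \<in> W"
    and lim: "(\<lambda>k. n (gs k - g)) \<longlonglongrightarrow> 0" and le: "\<And>k. n (gs k) \<le> m + inverse (real (Suc k))"
  shows "n g \<le> m"
proof -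
  have "n g \<le> m + inverse (real (Suc k)) + n (gs k - g)" for k
  proof -
    have "n (gs k + (g - gs k)) \<le> n (gs k) + n (g - gs k)"
      using normed_subspace_triangle[OF ns, of "gs k" "g - gs k"] gs g
      by (simp add: normed_subspace_closed[OF ns])
    then show ?thesis
      using le[of k] normed_subspace_commute[OF ns g gs[of k]] by simp
  qed
  moreover have "(\<lambda>k. m + inverse (real (Suc k)) + n (gs k - g)) \<longlonglongrightarrow> m + 0 + 0"
    by (intro tendsto_add tendsto_const LIMSEQ_inverse_real_of_nat lim)
  ultimately have "n g \<le> m + 0 + 0"
    by (intro LIMSEQ_le_const) auto
  then show ?thesis by simp
qed

context
  fixes V :: "'v::real_vector set" and nV :: "'v \<Rightarrow> real"
    and W :: "'w::real_vector set" and nW :: "'w \<Rightarrow> real" and R :: "('v \<times> 'w) set"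
  assumes gs: "gradient_space V nV W nW R"
begin

lemma gradient_space_reflexive: "reflexive_banach V nV" "reflexive_banach W nW"
  using gs unfolding gradient_space_def by blast+

lemma gradient_space_normed: "normed_subspace V nV" "normed_subspace W nW"
  using gradient_space_reflexive unfolding reflexive_banach_def banach_subspace_def by blast+

lemma gradient_space_relation: "gradient_relation R"
  using gs unfolding gradient_space_def by blast

lemma gradient_space_add: "(u, g) \<in> R \<Longrightarrow> (u', g') \<in> R \<Longrightarrow> (u + u', g + g') \<in> R"
  using gradient_space_relation unfolding gradient_relation_def by blast

lemma gradient_space_neg:
  assumes "u \<in> V" "g \<in> W" "(u, g) \<in> R"
  obtains g' where "g' \<in> W" "(- u, g') \<in> R"
  using gs assms unfolding gradient_space_def by blast

lemma gradient_space_limit: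
  assumes "u \<in> V" "g \<in> W" "\<And>i. us i \<in> V" "\<And>i. gs i \<in> W" "\<And>i. (us i, gs i) \<in> R"
    and "(\<lambda>i. nV (us i - u)) \<longlonglongrightarrow> 0" "(\<lambda>i. nW (gs i - g)) \<longlonglongrightarrow> 0"
  shows "(u, g) \<in> R"
proof -
  have "(\<lambda>i. nV (u - us i)) = (\<lambda>i. nV (us i - u))" "(\<lambda>i. nW (g - gs i)) = (\<lambda>i. nW (gs i - g))"
    using assms(1-4) normed_subspace_commute[OF gradient_space_normed(1)]
      normed_subspace_commute[OF gradient_space_normed(2)] by auto
  then have "(\<lambda>i. nV (u - us i)) \<longlonglongrightarrow> 0" "(\<lambda>i. nW (g - gs i)) \<longlonglongrightarrow> 0"
    using assms(6,7) by simp_all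
  then show ?thesis
    using gs assms(1-5) unfolding gradient_space_def by blast
qed

lemma convex_Sob: "convex (Sob V W R)"
proof -
  have "Sob V W R = fst ` ((V \<times> W) \<inter> R)" unfolding Sob_def by force
  moreover have "linear fst" by (rule linearI) auto
  ultimately show ?thesis
    using convex_gradient_relation[OF gradient_space_relation]
      subspace_imp_convex[OF normed_subspace_subspace[OF gradient_space_normed(1)]]
      subspace_imp_convex[OF normed_subspace_subspace[OF gradient_space_normed(2)]]
    by (metis convex_Int convex_Times convex_linear_image)
qed

lemma gradient_space_strictly_convex: "strictly_convex_norm W nW"
  using gs unfolding gradient_space_def by blast

lemma gradient_space_midpoint:
  assumes "(u1, g1) \<in> R" "(u2, g2) \<in> R"
  shows "((1/2) *\<^sub>R (u1 + u2), (1/2) *\<^sub>R (g1 + g2)) \<in> R"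
  using convexD[OF convex_gradient_relation[OF gradient_space_relation] assms, of "1/2" "1/2"]
  by (simp add: scaleR_add_right)

text \<open>The product \<open>V \<times> W\<close> is not known to be reflexive, so limits of nested sets of pairs are
  found componentwise.\<close>

lemma nested_pairs_fst_limit:
  assumes S_sub: "\<And>k. S k \<subseteq> V \<times> W" and S_ne: "\<And>k. S k \<noteq> {}"
    and S_convex: "\<And>k. convex (S k)" and S_dec: "\<And>k. S (Suc k) \<subseteq> S k"
    and V_bdd: "\<And>p. p \<in> S 0 \<Longrightarrow> nV (fst p) \<le> MV"
  obtains u where "u \<in> V"
    "\<And>k. S k \<inter> ({v \<in> V. nV (v - u) \<le> inverse (real (Suc k))} \<times> UNIV) \<noteq> {}"
proof -
  have lin: "linear fst" by (rule linearI) auto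
  have S_V: "fst ` S k \<subseteq> V" for k using S_sub[of k] by auto
  obtain u where u: "u \<in> V" "\<And>k. u \<in> norm_closure V nV (fst ` S k)"
    using reflexive_nested_convex_linear_image[where S = S, OF gradient_space_reflexive(1) lin S_V
        S_ne S_convex S_dec V_bdd]
    by blast
  have "S k \<inter> ({v \<in> V. nV (v - u) \<le> inverse (real (Suc k))} \<times> UNIV) \<noteq> {}" for k
  proof -
    have "inverse (real (Suc k)) > 0" by simp
    then obtain v where "v \<in> fst ` S k" "nV (v - u) < inverse (real (Suc k))"
      using u(2)[of k] unfolding norm_closure_def by blast
    then show ?thesis using S_sub by force
  qed
  with u(1) show ?thesis by (rule that)
qed

lemma nested_gradient_pairs_limit:
  assumes S_sub: "\<And>k. S k \<subseteq> R \<inter> (V \<times> W)" and S_ne: "\<And>k. S k \<noteq> {}"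
    and S_convex: "\<And>k. convex (S k)" and S_dec: "\<And>k. S (Suc k) \<subseteq> S k"
    and V_bdd: "\<And>p. p \<in> S 0 \<Longrightarrow> nV (fst p) \<le> MV" and W_bdd: "\<And>p. p \<in> S 0 \<Longrightarrow> nW (snd p) \<le> MW"
  obtains u g vs gs where "u \<in> V" "g \<in> W" "(u, g) \<in> R" "\<And>k. (vs k, gs k) \<in> S k"
    "(\<lambda>k. nV (vs k - u)) \<longlonglongrightarrow> 0" "(\<lambda>k. nW (gs k - g)) \<longlonglongrightarrow> 0"
proof -
  note nsV = gradient_space_normed(1) and nsW = gradient_space_normed(2)
  have S_VW: "S k \<subseteq> V \<times> W" for k using S_sub[of k] by blast
  obtain u where u: "u \<in> V"
    and T_ne: "\<And>k. S k \<inter> ({v \<in> V. nV (v - u) \<le> inverse (real (Suc k))} \<times> UNIV) \<noteq> {}"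
    using nested_pairs_fst_limit[where S = S, OF S_VW S_ne S_convex S_dec V_bdd] by blast
  define T where "T k = S k \<inter> ({v \<in> V. nV (v - u) \<le> inverse (real (Suc k))} \<times> UNIV)" for k
  have T_convex: "convex (T k)" for k
    unfolding T_def
    by (intro convex_Int S_convex convex_Times convex_normed_subspace_cball[OF nsV u(1)]
        convex_UNIV)
  have T_dec: "T (Suc k) \<subseteq> T k" for k
  proof -
    have "inverse (real (Suc (Suc k))) \<le> inverse (real (Suc k))" by (simp add: field_simps)
    then have "{v \<in> V. nV (v - u) \<le> inverse (real (Suc (Suc k)))}
        \<subseteq> {v \<in> V. nV (v - u) \<le> inverse (real (Suc k))}" by (auto intro: order_trans)
    then show ?thesis unfolding T_def using S_dec[of k] by blast
  qed
  have lin: "linear snd" by (rule linearI) auto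
  have T_W: "snd ` T k \<subseteq> W" for k using S_sub[of k] unfolding T_def by auto
  have T_bdd: "nW (snd p) \<le> MW" if "p \<in> T 0" for p using W_bdd that unfolding T_def by auto
  obtain g where g: "g \<in> W" "\<And>k. g \<in> norm_closure W nW (snd ` T k)"
    using reflexive_nested_convex_linear_image[where S = T, OF gradient_space_reflexive(2) lin T_W
        T_ne[folded T_def] T_convex T_dec T_bdd]
    by blast
  have "inverse (real (Suc k)) > 0" for k by simp
  then have "\<forall>k. \<exists>p\<in>T k. nW (snd p - g) < inverse (real (Suc k))"
    using g(2) unfolding norm_closure_def by blast
  then obtain ps where ps: "\<And>k. ps k \<in> T k" "\<And>k. nW (snd (ps k) - g) < inverse (real (Suc k))"
    by metis
  have in_VW: "fst (ps k) \<in> V" "snd (ps k) \<in> W" for k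
    using ps(1)[of k] S_VW[of k] unfolding T_def by (auto simp: mem_Times_iff)
  have lim_v: "(\<lambda>k. nV (fst (ps k) - u)) \<longlonglongrightarrow> 0"
  proof (rule LIMSEQ_0_if_le_inverse_Suc)
    show "0 \<le> nV (fst (ps k) - u)" for k
      using in_VW(1) u(1)
      by (simp add: normed_subspace_nonneg[OF nsV] normed_subspace_closed[OF nsV])
    show "nV (fst (ps k) - u) \<le> inverse (real (Suc k))" for k
      using ps(1)[of k] unfolding T_def by (auto simp: mem_Times_iff)
  qed
  have lim_g: "(\<lambda>k. nW (snd (ps k) - g)) \<longlonglongrightarrow> 0"
  proof (rule LIMSEQ_0_if_le_inverse_Suc)
    show "0 \<le> nW (snd (ps k) - g)" for k
      using in_VW(2) g(1)
      by (simp add: normed_subspace_nonneg[OF nsW] normed_subspace_closed[OF nsW])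
    show "nW (snd (ps k) - g) \<le> inverse (real (Suc k))" for k
      using ps(2)[of k] by simp
  qed
  have pairs: "(fst (ps k), snd (ps k)) \<in> S k" for k using ps(1)[of k] unfolding T_def by simp
  have "(u, g) \<in> R"
    using pairs S_sub in_VW u(1) g(1) lim_v lim_g
    by (intro gradient_space_limit[of u g "\<lambda>k. fst (ps k)" "\<lambda>k. snd (ps k)"]) blast+
  then show ?thesis by (rule that[OF u(1) g(1) _ pairs lim_v lim_g])
qed

lemma least_norm_gradient_exists:
  assumes C_sub: "C \<subseteq> V" and C_convex: "convex C" and C_closed: "seq_closed_in V nV C"
    and C_bdd: "\<And>c. \<exists>B. \<forall>v\<in>C. \<forall>g\<in>W. (v, g) \<in> R \<and> nW g \<le> c \<longrightarrow> nV v \<le> B"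
    and v0: "v0 \<in> C" "g0 \<in> W" "(v0, g0) \<in> R"
  obtains u g where "u \<in> C" "g \<in> W" "(u, g) \<in> R"
    "\<And>v h. v \<in> C \<Longrightarrow> h \<in> W \<Longrightarrow> (v, h) \<in> R \<Longrightarrow> nW g \<le> nW h"
proof -
  note nsW = gradient_space_normed(2)
  define P where "P = R \<inter> (C \<times> W)"
  define m where "m = Inf ((\<lambda>p. nW (snd p)) ` P)"
  define S where "S k = {p \<in> P. nW (snd p) \<le> m + inverse (real (Suc k))}" for k
  have P_convex: "convex P"
    unfolding P_def using convex_gradient_relation[OF gradient_space_relation] C_convex
      subspace_imp_convex[OF normed_subspace_subspace[OF nsW]]
    by (intro convex_Int convex_Times)
  have "P \<subseteq> UNIV \<times> W" "P \<noteq> {}" using v0 unfolding P_def by auto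
  note sublevels = norm_sublevels_of_pairs[OF nsW P_convex this, folded m_def]
  have m_le: "m \<le> nW h" if "(v, h) \<in> P" for v h using sublevels(1)[OF that] by simp
  have S_sub: "S k \<subseteq> R \<inter> (V \<times> W)" for k
    using C_sub unfolding S_def P_def by blast
  have S_ne: "S k \<noteq> {}" for k using sublevels(2)[of "inverse (real (Suc k))"] unfolding S_def
    by simp
  have S_convex: "convex (S k)" for k using sublevels(3) unfolding S_def .
  have S_dec: "S (Suc k) \<subseteq> S k" for k
  proof -
    have "inverse (real (Suc (Suc k))) \<le> inverse (real (Suc k))" by (simp add: field_simps)
    then show ?thesis unfolding S_def by (auto intro: order_trans)
  qed
  obtain B where B: "\<And>v g. v \<in> C \<Longrightarrow> g \<in> W \<Longrightarrow> (v, g) \<in> R \<Longrightarrow> nW g \<le> m + 1 \<Longrightarrow> nV v \<le> B"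
    using C_bdd[of "m + 1"] by blast
  have S0_bdd_V: "nV (fst p) \<le> B" if "p \<in> S 0" for p
    using that B unfolding S_def P_def by auto
  have S0_bdd_W: "nW (snd p) \<le> m + 1" if "p \<in> S 0" for p
    using that unfolding S_def by auto
  obtain u g vs gs where ug: "u \<in> V" "g \<in> W" "(u, g) \<in> R" and pairs: "\<And>k. (vs k, gs k) \<in> S k"
    and vs: "(\<lambda>k. nV (vs k - u)) \<longlonglongrightarrow> 0" and gs: "(\<lambda>k. nW (gs k - g)) \<longlonglongrightarrow> 0"
    using nested_gradient_pairs_limit[where S = S, OF S_sub S_ne S_convex S_dec S0_bdd_V S0_bdd_W]
    by blast
  have "vs k \<in> C" for k using pairs[of k] unfolding S_def P_def by blast
  then have "u \<in> C"
    using C_closed vs ug(1) unfolding seq_closed_in_def by blast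
  have gs_W: "gs k \<in> W" and gs_le: "nW (gs k) \<le> m + inverse (real (Suc k))" for k
    using pairs[of k] unfolding S_def P_def by auto
  have "nW g \<le> m" by (rule normed_subspace_le_of_approx[OF nsW ug(2) gs_W gs gs_le])
  show ?thesis
  proof (rule that[OF \<open>u \<in> C\<close> ug(2,3)])
    fix v h assume "v \<in> C" "h \<in> W" "(v, h) \<in> R"
    then have "m \<le> nW h" using m_le unfolding P_def by blast
    then show "nW g \<le> nW h" using \<open>nW g \<le> m\<close> by simp
  qed
qed

lemma seq_closed_singleton:
  assumes "u \<in> V"
  shows "seq_closed_in V nV {u}"
  unfolding seq_closed_in_def
proof (intro allI impI)
  fix us u' assume h: "(\<forall>i. us i \<in> {u}) \<and> u' \<in> V \<and> (\<lambda>i. nV (us i - u')) \<longlonglongrightarrow> 0"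
  then have "(\<lambda>i. nV (us i - u')) = (\<lambda>i. nV (u - u'))" by auto
  then have "(\<lambda>i. nV (u - u')) \<longlonglongrightarrow> 0" using h by metis
  then have "nV (u - u') = 0" by (simp add: LIMSEQ_const_iff)
  then show "u' \<in> {u}"
    using normed_subspace_eq_0_iff[OF gradient_space_normed(1)] assms h
    by (simp add: normed_subspace_closed[OF gradient_space_normed(1)])
qed

lemma least_gradient_exists:
  assumes "u \<in> Sob V W R"
  obtains g where "g \<in> W" "(u, g) \<in> R" "\<And>h. h \<in> W \<Longrightarrow> (u, h) \<in> R \<Longrightarrow> nW g \<le> nW h"
proof -
  obtain g0 where uV: "u \<in> V" and g0: "g0 \<in> W" "(u, g0) \<in> R"
    using assms unfolding Sob_def by blast
  have bdd: "\<exists>B. \<forall>v\<in>{u}. \<forall>g\<in>W. (v, g) \<in> R \<and> nW g \<le> c \<longrightarrow> nV v \<le> B" for c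
    by blast
  have single: "{u} \<subseteq> V" "u \<in> {u}" using uV by simp_all
  show ?thesis
  proof (rule least_norm_gradient_exists[OF single(1) convex_singleton seq_closed_singleton[OF uV]
      bdd single(2) g0])
    fix u' g assume "u' \<in> {u}" "g \<in> W" "(u', g) \<in> R"
      "\<And>v h. v \<in> {u} \<Longrightarrow> h \<in> W \<Longrightarrow> (v, h) \<in> R \<Longrightarrow> nW g \<le> nW h"
    then show thesis using that by blast
  qed
qed

lemma least_gradient_unique:
  assumes g: "g \<in> W" "(u, g) \<in> R" "\<And>g'. g' \<in> W \<Longrightarrow> (u, g') \<in> R \<Longrightarrow> nW g \<le> nW g'"
    and h: "h \<in> W" "(u, h) \<in> R" "\<And>g'. g' \<in> W \<Longrightarrow> (u, g') \<in> R \<Longrightarrow> nW h \<le> nW g'"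
  shows "h = g"
proof -
  have "(u, (1/2) *\<^sub>R (h + g)) \<in> R"
    using gradient_space_midpoint[OF h(2) g(2)] by simp
  moreover have "(1/2) *\<^sub>R (h + g) \<in> W"
    using h g by (simp add: normed_subspace_closed[OF gradient_space_normed(2)])
  ultimately have "nW h \<le> nW ((1/2) *\<^sub>R (h + g))" using h(3) by blast
  moreover have "nW h = nW g" using g h by (meson order_antisym)
  ultimately show "h = g"
    using strictly_convex_norm_midpoint_eq[OF gradient_space_normed(2)
        gradient_space_strictly_convex h(1) g(1)] by blast
qed

lemma min_grad_is_least_gradient:
  assumes "u \<in> Sob V W R"
  shows "min_grad W nW R u \<in> W" "(u, min_grad W nW R u) \<in> R"
    "\<And>g. g \<in> W \<Longrightarrow> (u, g) \<in> R \<Longrightarrow> nW (min_grad W nW R u) \<le> nW g"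
proof -
  obtain g where g: "g \<in> W" "(u, g) \<in> R" and least: "\<And>h. h \<in> W \<Longrightarrow> (u, h) \<in> R \<Longrightarrow> nW g \<le> nW h"
    using least_gradient_exists[OF assms] by blast
  have "min_grad W nW R u = g"
    unfolding min_grad_def
  proof (rule the_equality)
    show "g \<in> W \<and> (u, g) \<in> R \<and> (\<forall>g'\<in>W. (u, g') \<in> R \<longrightarrow> nW g \<le> nW g')"
      using g least by blast
  next
    fix h assume "h \<in> W \<and> (u, h) \<in> R \<and> (\<forall>g'\<in>W. (u, g') \<in> R \<longrightarrow> nW h \<le> nW g')"
    then show "h = g" using least_gradient_unique[OF g least] by blast
  qed
  then show "min_grad W nW R u \<in> W" "(u, min_grad W nW R u) \<in> R"
    "\<And>h. h \<in> W \<Longrightarrow> (u, h) \<in> R \<Longrightarrow> nW (min_grad W nW R u) \<le> nW h"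
    using g least by simp_all
qed

lemma min_grad_least_attained:
  assumes C_sub: "C \<subseteq> V" and C_convex: "convex C" and C_closed: "seq_closed_in V nV C"
    and C_bdd: "\<And>c. \<exists>B. \<forall>v\<in>C. \<forall>g\<in>W. (v, g) \<in> R \<and> nW g \<le> c \<longrightarrow> nV v \<le> B"
    and C_ne: "C \<inter> Sob V W R \<noteq> {}"
  shows "\<exists>u\<in>C \<inter> Sob V W R.
    nW (min_grad W nW R u) = (INF v\<in>C \<inter> Sob V W R. nW (min_grad W nW R v))"
proof -
  let ?g = "min_grad W nW R"
  obtain v0 g0 where v0: "v0 \<in> C" "g0 \<in> W" "(v0, g0) \<in> R"
    using C_ne unfolding Sob_def by blast
  obtain u g where u: "u \<in> C" "g \<in> W" "(u, g) \<in> R"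
    and least: "\<And>v h. v \<in> C \<Longrightarrow> h \<in> W \<Longrightarrow> (v, h) \<in> R \<Longrightarrow> nW g \<le> nW h"
    using least_norm_gradient_exists[OF C_sub C_convex C_closed C_bdd v0] by blast
  have uK: "u \<in> C \<inter> Sob V W R" using u C_sub unfolding Sob_def by blast
  have "nW (?g u) \<le> nW (?g v)" if "v \<in> C \<inter> Sob V W R" for v
  proof -
    have "nW (?g u) \<le> nW g" using min_grad_is_least_gradient(3)[of u g] uK u by blast
    also have "\<dots> \<le> nW (?g v)" using least[of v "?g v"] min_grad_is_least_gradient(1,2)[of v] that
      by blast
    finally show ?thesis .
  qed
  then have "(INF v\<in>C \<inter> Sob V W R. nW (?g v)) = nW (?g u)"
    using uK by (intro cInf_eq_minimum) auto
  then show ?thesis using uK by auto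
qed

lemma min_grad_eq_of_minimizers:
  assumes K_sub: "K \<subseteq> Sob V W R" and K_convex: "convex K" and u: "u1 \<in> K" "u2 \<in> K"
    and min: "nW (min_grad W nW R u1) = (INF v\<in>K. nW (min_grad W nW R v))"
      "nW (min_grad W nW R u2) = (INF v\<in>K. nW (min_grad W nW R v))"
  shows "min_grad W nW R u1 = min_grad W nW R u2"
proof -
  let ?g = "min_grad W nW R"
  note nsW = gradient_space_normed(2)
  have g: "?g u1 \<in> W" "?g u2 \<in> W" "(u1, ?g u1) \<in> R" "(u2, ?g u2) \<in> R"
    using min_grad_is_least_gradient(1,2) u K_sub by blast+
  define w where "w = (1/2) *\<^sub>R (u1 + u2)"
  have wK: "w \<in> K"
    using convexD[OF K_convex u, of "1/2" "1/2"] unfolding w_def by (simp add: scaleR_add_right)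
  have "bdd_below ((\<lambda>v. nW (?g v)) ` K)"
    using min_grad_is_least_gradient(1) K_sub normed_subspace_nonneg[OF nsW]
    by (intro bdd_belowI2[of _ 0]) blast
  then have "nW (?g u1) \<le> nW (?g w)" using min(1) cINF_lower[OF _ wK] by simp
  also have "\<dots> \<le> nW ((1/2) *\<^sub>R (?g u1 + ?g u2))"
  proof (rule min_grad_is_least_gradient(3))
    show "w \<in> Sob V W R" using wK K_sub by blast
    show "(1/2) *\<^sub>R (?g u1 + ?g u2) \<in> W" using g(1,2) by (simp add: normed_subspace_closed[OF nsW])
    show "(w, (1/2) *\<^sub>R (?g u1 + ?g u2)) \<in> R"
      using gradient_space_midpoint[OF g(3,4)] unfolding w_def .
  qed
  finally show ?thesis
    using strictly_convex_norm_midpoint_eq[OF nsW gradient_space_strictly_convex g(1,2)] min by simp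
qed

lemma eq_of_min_grad_eq_linear:
  assumes K0: "poincare_set V nV W nW R K0"
    and lin_add: "\<forall>u\<in>Sob V W R. \<forall>v\<in>Sob V W R.
      min_grad W nW R (u + v) = min_grad W nW R u + min_grad W nW R v"
    and lin_scale: "\<forall>c. \<forall>u\<in>Sob V W R. min_grad W nW R (c *\<^sub>R u) = c *\<^sub>R min_grad W nW R u"
    and u: "u1 \<in> Sob V W R" "u2 \<in> Sob V W R" "u1 - u2 \<in> K0"
    and eq: "min_grad W nW R u1 = min_grad W nW R u2"
  shows "u1 = u2"
proof -
  let ?g = "min_grad W nW R"
  note nsV = gradient_space_normed(1) and nsW = gradient_space_normed(2)
  have u2V: "u2 \<in> V" using u(2) unfolding Sob_def by blast
  obtain g' where "g' \<in> W" "(- u2, g') \<in> R"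
    using gradient_space_neg[OF u2V min_grad_is_least_gradient(1,2)[OF u(2)]] by blast
  then have neg: "(-1) *\<^sub>R u2 \<in> Sob V W R"
    using u2V unfolding Sob_def by (auto simp: normed_subspace_closed[OF nsV])
  have "?g (u1 + (-1) *\<^sub>R u2) = ?g u1 + ?g ((-1) *\<^sub>R u2)"
    using lin_add u(1) neg by blast
  also have "?g ((-1) *\<^sub>R u2) = (-1) *\<^sub>R ?g u2"
    using lin_scale u(2) by blast
  finally have "?g (u1 - u2) = 0" using eq by simp
  then have "(u1 - u2, 0) \<in> R"
    using min_grad_is_least_gradient(2)[of "u1 - u2"] K0 u(3) unfolding poincare_set_def by auto
  then have "nV (u1 - u2) \<le> 0"
    using K0 u(3) normed_subspace_closed(5)[OF nsW] normed_subspace_zero[OF nsW]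
    unfolding poincare_set_def by fastforce
  moreover have "u1 - u2 \<in> V" using K0 u(3) unfolding poincare_set_def Sob_def by blast
  ultimately show ?thesis
    using normed_subspace_nonneg[OF nsV] normed_subspace_eq_0_iff[OF nsV] by force
qed

lemma poincare_set_translate_bounded:
  assumes K0: "poincare_set V nV W nW R K0" and f: "f \<in> Sob V W R"
    and C_sub: "C \<subseteq> {u \<in> V. u - f \<in> K0}"
  shows "\<exists>B. \<forall>v\<in>C. \<forall>g\<in>W. (v, g) \<in> R \<and> nW g \<le> c \<longrightarrow> nV v \<le> B"
proof -
  note nsV = gradient_space_normed(1) and nsW = gradient_space_normed(2)
  obtain Cp where Cp: "Cp > 0" "\<And>u g. u \<in> K0 \<Longrightarrow> g \<in> W \<Longrightarrow> (u, g) \<in> R \<Longrightarrow> nV u \<le> Cp * nW g"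
    using K0 unfolding poincare_set_def by blast
  obtain gf where fV: "f \<in> V" and gf: "gf \<in> W" "(f, gf) \<in> R"
    using f unfolding Sob_def by blast
  obtain gf' where gf': "gf' \<in> W" "(- f, gf') \<in> R"
    using gradient_space_neg[OF fV gf] by blast
  have "nV v \<le> nV f + Cp * (c + nW gf')" if v: "v \<in> C" "g \<in> W" "(v, g) \<in> R" "nW g \<le> c" for v g
  proof -
    have vV: "v \<in> V" and vK0: "v - f \<in> K0" using v(1) C_sub by auto
    have "(v - f, g + gf') \<in> R" using gradient_space_add[OF v(3) gf'(2)] by simp
    then have "nV (v - f) \<le> Cp * nW (g + gf')"
      using Cp(2)[OF vK0] v(2) gf'(1) by (simp add: normed_subspace_closed[OF nsW])
    also have "\<dots> \<le> Cp * (c + nW gf')"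
      using normed_subspace_triangle[OF nsW v(2) gf'(1)] v(4) Cp(1) by (simp add: mult_left_mono)
    finally have "nV (v - f) \<le> Cp * (c + nW gf')" .
    moreover have "nV ((v - f) + f) \<le> nV (v - f) + nV f"
      using normed_subspace_triangle[OF nsV, of "v - f" f] vV fV
      by (simp add: normed_subspace_closed[OF nsV])
    ultimately show ?thesis by simp
  qed
  then show ?thesis by blast
qed

end

section \<open>Admissible sets\<close>

lemma linear_preorder_neg:
  assumes "linear_preorder le" "le a b"
  shows "le (- b) (- a)"
proof -
  have "le ((- a - b) + a) ((- a - b) + b)"
    using assms unfolding linear_preorder_def by blast
  then show ?thesis by simp
qed

lemma convex_linear_preorder_ge:
  assumes "linear_preorder le"
  shows "convex {u. le \<psi> u}"
proof (rule convexI)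
  fix u1 u2 and a b :: real
  assume u: "u1 \<in> {u. le \<psi> u}" "u2 \<in> {u. le \<psi> u}" and ab: "0 \<le> a" "0 \<le> b" "a + b = 1"
  have trans: "\<And>x y z. le x y \<Longrightarrow> le y z \<Longrightarrow> le x z"
    and add: "\<And>x y z. le y z \<Longrightarrow> le (x + y) (x + z)"
    and scale: "\<And>x y \<alpha>. le x y \<Longrightarrow> \<alpha> \<ge> 0 \<Longrightarrow> le (\<alpha> *\<^sub>R x) (\<alpha> *\<^sub>R y)"
    using assms unfolding linear_preorder_def by blast+
  have "le (a *\<^sub>R \<psi> + b *\<^sub>R \<psi>) (a *\<^sub>R \<psi> + b *\<^sub>R u2)"
    using add scale u(2) ab(2) by simp
  moreover have "le (b *\<^sub>R u2 + a *\<^sub>R \<psi>) (b *\<^sub>R u2 + a *\<^sub>R u1)"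
    using add scale u(1) ab(1) by simp
  then have "le (a *\<^sub>R \<psi> + b *\<^sub>R u2) (a *\<^sub>R u1 + b *\<^sub>R u2)" by (simp add: add.commute)
  moreover have "a *\<^sub>R \<psi> + b *\<^sub>R \<psi> = \<psi>" using ab(3) by (metis scaleR_add_left scaleR_one)
  ultimately show "a *\<^sub>R u1 + b *\<^sub>R u2 \<in> {u. le \<psi> u}" using trans by fastforce
qed

lemma seq_closed_linear_preorder_ge:
  assumes "preordered_gradient_space V nV W nW R le"
  shows "seq_closed_in V nV {u \<in> V. le \<psi> u}"
  unfolding seq_closed_in_def
proof (intro allI impI)
  fix us u assume h: "(\<forall>i. us i \<in> {u \<in> V. le \<psi> u}) \<and> u \<in> V \<and> (\<lambda>i. nV (us i - u)) \<longlonglongrightarrow> 0"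
  have nsV: "normed_subspace V nV"
    using assms gradient_space_normed(1) unfolding preordered_gradient_space_def by blast
  have lp: "linear_preorder le"
    and closed: "\<And>us u \<psi>. (\<forall>i. us i \<in> V \<and> le (us i) \<psi>) \<and> u \<in> V \<and> (\<lambda>i. nV (us i - u)) \<longlonglongrightarrow> 0
      \<Longrightarrow> le u \<psi>"
    using assms unfolding preordered_gradient_space_def by blast+
  \<comment> \<open>the closedness axiom of the preorder speaks about upper bounds; negation reverses the order\<close>
  have "(\<lambda>i. nV (- us i - - u)) = (\<lambda>i. nV (us i - u))"
    using h normed_subspace_minus[OF nsV, of "us _ - u"]
    by (auto simp: normed_subspace_closed[OF nsV])
  then have "le (- u) (- \<psi>)"
    using h linear_preorder_neg[OF lp]
    by (intro closed[of "\<lambda>i. - us i"]) (auto simp: normed_subspace_closed[OF nsV])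
  then show "u \<in> {u \<in> V. le \<psi> u}" using linear_preorder_neg[OF lp] h by fastforce
qed

lemma seq_closed_translate:
  assumes ns: "normed_subspace V n" and fV: "f \<in> V" and closed: "seq_closed_in V n K0"
  shows "seq_closed_in V n {u \<in> V. u - f \<in> K0}"
  unfolding seq_closed_in_def
proof (intro allI impI)
  fix us u assume h: "(\<forall>i. us i \<in> {u \<in> V. u - f \<in> K0}) \<and> u \<in> V \<and> (\<lambda>i. n (us i - u)) \<longlonglongrightarrow> 0"
  then have "(\<lambda>i. n ((us i - f) - (u - f))) \<longlonglongrightarrow> 0" by simp
  moreover have "u - f \<in> V" using h fV by (simp add: normed_subspace_closed[OF ns])
  moreover have "\<forall>i. us i - f \<in> K0" using h by blast
  ultimately have "u - f \<in> K0"
    using closed[unfolded seq_closed_in_def, rule_format, of "\<lambda>i. us i - f" "u - f"] by blast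
  then show "u \<in> {u \<in> V. u - f \<in> K0}" using h by blast
qed

lemma seq_closed_Int: "seq_closed_in V n A \<Longrightarrow> seq_closed_in V n B \<Longrightarrow> seq_closed_in V n (A \<inter> B)"
  unfolding seq_closed_in_def by blast

lemma admissible_set:
  fixes V :: "'v::real_vector set" and \<psi> :: 'v
  assumes pgs: "preordered_gradient_space V nV W nW R le" and K0_convex: "convex K0"
    and K0_poincare: "poincare_set V nV W nW R K0" and K0_closed: "seq_closed_in V nV K0"
    and f_Sob: "f \<in> Sob V W R"
  defines "C \<equiv> {u \<in> V. u - f \<in> K0} \<inter> {u \<in> V. le \<psi> u}"
  shows "C \<subseteq> V" "convex C" "seq_closed_in V nV C"
    "\<And>c. \<exists>B. \<forall>v\<in>C. \<forall>g\<in>W. (v, g) \<in> R \<and> nW g \<le> c \<longrightarrow> nV v \<le> B"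
proof -
  have gs: "gradient_space V nV W nW R" and lp: "linear_preorder le"
    using pgs unfolding preordered_gradient_space_def by blast+
  note nsV = gradient_space_normed(1)[OF gs]
  have fV: "f \<in> V" using f_Sob unfolding Sob_def by blast
  show "C \<subseteq> V" unfolding C_def by blast
  have "C = (V \<inter> (+) f ` K0) \<inter> (V \<inter> {u. le \<psi> u})"
    unfolding C_def by (force simp: algebra_simps)
  then show "convex C"
    using subspace_imp_convex[OF normed_subspace_subspace[OF nsV]] K0_convex
      convex_linear_preorder_ge[OF lp, of \<psi>]
    by (simp add: convex_Int convex_translation)
  show "seq_closed_in V nV C"
    unfolding C_def
    by (intro seq_closed_Int seq_closed_translate[OF nsV fV K0_closed]
        seq_closed_linear_preorder_ge[OF pgs])
  show "\<exists>B. \<forall>v\<in>C. \<forall>g\<in>W. (v, g) \<in> R \<and> nW g \<le> c \<longrightarrow> nV v \<le> B" for c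
    by (rule poincare_set_translate_bounded[OF gs K0_poincare f_Sob]) (auto simp: C_def)
qed

theorem mainTheorem9:
  fixes V :: "'v::real_vector set" and nV :: "'v \<Rightarrow> real"
    and W :: "'w::real_vector set" and nW :: "'w \<Rightarrow> real"
    and R :: "('v \<times> 'w) set" and le :: "'v \<Rightarrow> 'v \<Rightarrow> bool"
    and K0 :: "'v set" and f \<psi> :: 'v
  assumes pgs: "preordered_gradient_space V nV W nW R le"
    and K0_convex: "convex K0"
    and K0_poincare: "poincare_set V nV W nW R K0"
    and K0_closed: "\<forall>us u. (\<forall>i. us i \<in> K0) \<and> u \<in> V \<and> (\<lambda>i. nV (us i - u)) \<longlonglongrightarrow> 0 \<longrightarrow> u \<in> K0"
    and f_Sob: "f \<in> Sob V W R"
    and K_def: "K = {u \<in> Sob V W R. u - f \<in> K0 \<and> le \<psi> u}"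
    and K_ne: "K \<noteq> {}"
  shows "(\<exists>u\<in>K. nW (min_grad W nW R u) = (INF v\<in>K. nW (min_grad W nW R v)))
    \<and> (\<forall>u1\<in>K. \<forall>u2\<in>K.
          nW (min_grad W nW R u1) = (INF v\<in>K. nW (min_grad W nW R v)) \<and>
          nW (min_grad W nW R u2) = (INF v\<in>K. nW (min_grad W nW R v))
          \<longrightarrow> min_grad W nW R u1 = min_grad W nW R u2)
    \<and> (subspace K0 \<and>
       (\<forall>u\<in>Sob V W R. \<forall>v\<in>Sob V W R.
          min_grad W nW R (u + v) = min_grad W nW R u + min_grad W nW R v) \<and>
       (\<forall>c. \<forall>u\<in>Sob V W R. min_grad W nW R (c *\<^sub>R u) = c *\<^sub>R min_grad W nW R u)
       \<longrightarrow> (\<forall>u1\<in>K. \<forall>u2\<in>K.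
          nW (min_grad W nW R u1) = (INF v\<in>K. nW (min_grad W nW R v)) \<and>
          nW (min_grad W nW R u2) = (INF v\<in>K. nW (min_grad W nW R v))
          \<longrightarrow> u1 = u2))"
proof -
  let ?g = "min_grad W nW R" and ?m = "INF v\<in>K. nW (min_grad W nW R v)"
  have gs: "gradient_space V nV W nW R"
    using pgs unfolding preordered_gradient_space_def by blast
  define C where "C = {u \<in> V. u - f \<in> K0} \<inter> {u \<in> V. le \<psi> u}"
  have C: "C \<subseteq> V" "convex C" "seq_closed_in V nV C"
    "\<And>c. \<exists>B. \<forall>v\<in>C. \<forall>g\<in>W. (v, g) \<in> R \<and> nW g \<le> c \<longrightarrow> nV v \<le> B"
    using admissible_set[OF pgs K0_convex K0_poincare _ f_Sob] K0_closed
    unfolding C_def seq_closed_in_def by blast+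
  have K_eq: "K = C \<inter> Sob V W R" unfolding K_def C_def Sob_def by auto
  have K_convex: "convex K" unfolding K_eq by (intro convex_Int C(2) convex_Sob[OF gs])
  have "\<exists>u\<in>K. nW (?g u) = ?m"
    using min_grad_least_attained[OF gs C] K_eq K_ne by simp
  moreover have same_grad: "?g u1 = ?g u2"
    if "u1 \<in> K" "u2 \<in> K" "nW (?g u1) = ?m" "nW (?g u2) = ?m" for u1 u2
    using min_grad_eq_of_minimizers[OF gs _ K_convex that] K_eq by blast
  moreover have "u1 = u2"
    if "subspace K0" "\<forall>u\<in>Sob V W R. \<forall>v\<in>Sob V W R. ?g (u + v) = ?g u + ?g v"
      "\<forall>c. \<forall>u\<in>Sob V W R. ?g (c *\<^sub>R u) = c *\<^sub>R ?g u"
      "u1 \<in> K" "u2 \<in> K" "nW (?g u1) = ?m" "nW (?g u2) = ?m" for u1 u2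
  proof (rule eq_of_min_grad_eq_linear[OF gs K0_poincare that(2,3)])
    show "u1 \<in> Sob V W R" "u2 \<in> Sob V W R" using that(4,5) K_eq by blast+
    show "u1 - u2 \<in> K0"
      using subspace_diff[OF that(1), of "u1 - f" "u2 - f"] that(4,5) unfolding K_def by auto
    show "?g u1 = ?g u2" by (rule same_grad[OF that(4-7)])
  qed
  ultimately show ?thesis by blast
qed

end
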